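(* Let $E_8$, $\alpha_0,\dots,\alpha_8$, $n_i$, $L=L(i)$ and $\xi$ be as in the context. Write $L=R_1\oplus\cdots\oplus R_l$ with $R_k$ indecomposable root lattices with root systems $\Phi_k$, let $s^k=s(\Phi_k)\in V_{\sqrt2R_k}\subset V_{\sqrt2L}\subset V_{\sqrt2E_8}$, and let \[U=\{v\in V_{\sqrt2E_8} : (s^k)_1v=0\text{ for all }k=1,\dots,l\}.\] For $j=1,\dots,n_i-1$ let $H_j=\{\alpha\in j\alpha_i+L:\langle\alpha,\alpha\rangle=2\}$ and $X^j=\sum_{\alpha\in H_j}e^{\sqrt2\alpha}$. Let $\hat e=\frac1{16}\omega+\frac1{32}\sum_{\alpha\in\Phi(E_8)}e^{\sqrt2\alpha}$ and $\hat f=\sigma\hat e$. Then (1) $X^j\in U$ for $j=1,\dots,n_i-1$; (2) $\hat e,\hat f\in U$.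
   Context: $E_8$ is the root lattice of type $E_8$ with simple roots $\alpha_1,\dots,\alpha_8$: $\langle\alpha_j,\alpha_j\rangle=2$, $\langle\alpha_j,\alpha_{j+1}\rangle=-1$ for $1\le j\le6$, $\langle\alpha_5,\alpha_8\rangle=-1$, all other pairs orthogonal. Set $\alpha_0=-(2\alpha_1+3\alpha_2+4\alpha_3+5\alpha_4+6\alpha_5+4\alpha_6+2\alpha_7+3\alpha_8)$ (minus the highest root; it is a root with $\langle\alpha_0,\alpha_1\rangle=-1$, orthogonal to $\alpha_2,\dots,\alpha_8$), so $\alpha_0,\dots,\alpha_8$ form the extended $E_8$ diagram. Let $(n_0,\dots,n_8)=(1,2,3,4,5,6,4,2,3)$. Fix $i\in\{0,\dots,8\}$ and let $L=L(i)$ be the sublattice generated by $\{\alpha_j:0\le j\le8,\ j\ne i\}$; then $|E_8/L|=n_i$ and $E_8=\bigcup_{j=0}^{n_i-1}(j\alpha_i+L)$. $\Phi(E_8)$ is the set of $240$ roots of $E_8$. $V_{\sqrt2E_8}=M(1)\otimes\mathbb{C}[\sqrt2E_8]$ is the standard lattice vertex operator algebra (ordinary group algebra, since $\sqrt2E_8$ is doubly even) with Virasoro element $\omega$; $V_{\sqrt2L}$ is its subalgebra $M(1)\otimes\mathbb{C}[\sqrt2L]$, and $V_{\sqrt2L}\cong V_{\sqrt2R_1}\otimes\cdots\otimes V_{\sqrt2R_l}$. For an indecomposable root lattice $R$ of type $A,D,E$ with root system $\Phi_R$, positive roots $\Phi_R^+$ and Coxeter number $h$, $s(\Phi_R)=\frac1{2(h+2)}\sum_{\alpha\in\Phi_R^+}(\alpha(-1)^2\cdot1-2(e^{\sqrt2\alpha}+e^{-\sqrt2\alpha}))\in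 V_{\sqrt2R}$. The automorphism $\sigma$ of $V_{\sqrt2E_8}$ acts on $M(1)\otimes e^{\sqrt2\gamma}$ for $\gamma\in j\alpha_i+L$ as multiplication by $\xi^j$, where $\xi=e^{2\pi\sqrt{-1}/n_i}$. Component operators: $Y(v,z)=\sum_nv_nz^{-n-1}$. *)

theory Defs
  imports Complex_Main "HOL-Library.Multiset" "HOL-Library.Product_Lexorder"
begin

section \<open>The lattice E8 in coordinates w.r.t. alpha_1..alpha_8\<close>

type_synonym lat = "nat \<Rightarrow> int"   (* coordinates, indices 1..8, zero elsewhere *)

definition E8 :: "lat set" where
  "E8 = {x. \<forall>k. k \<notin> {1..8} \<longrightarrow> x k = 0}"

definition gram :: "nat \<Rightarrow> nat \<Rightarrow> int" where
  "gram a b = (if a \<in> {1..8} \<and> b \<in> {1..8} then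
      (if a = b then 2
       else if (a + 1 = b \<and> a \<le> 6) \<or> (b + 1 = a \<and> b \<le> 6) \<or> {a, b} = {5, 8} then -1
       else 0)
    else 0)"

definition ip :: "lat \<Rightarrow> lat \<Rightarrow> int" where
  "ip x y = (\<Sum>a=1..8. \<Sum>b=1..8. x a * gram a b * y b)"

definition neg :: "lat \<Rightarrow> lat" where "neg x = (\<lambda>k. - x k)"

(* coefficients of the highest root *)
definition hr :: "nat \<Rightarrow> int" where
  "hr k = (if k \<in> {1..8} then [2,3,4,5,6,4,2,3] ! (k - 1) else 0)"

(* simple roots alpha_1..alpha_8 and alpha_0 = - highest root *)
definition sr :: "nat \<Rightarrow> lat" where
  "sr j = (if j = 0 then (\<lambda>k. - hr k) else (\<lambda>k. if k = j then 1 else 0))"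

definition nn :: "nat \<Rightarrow> nat" where
  "nn i = [1,2,3,4,5,6,4,2,3] ! i"

definition lcomb :: "(nat \<Rightarrow> int) \<Rightarrow> nat set \<Rightarrow> lat" where
  "lcomb c S = (\<lambda>k. \<Sum>j\<in>S. c j * sr j k)"

definition Lsub :: "nat \<Rightarrow> lat set" where
  "Lsub i = {lcomb c ({0..8} - {i}) | c. True}"

definition PhiE8 :: "lat set" where
  "PhiE8 = {x \<in> E8. ip x x = 2}"

section \<open>Decomposition of L(i) into indecomposable root lattices\<close>

definition Dnodes :: "nat \<Rightarrow> nat set" where "Dnodes i = {0..8} - {i}"

definition adj :: "nat \<Rightarrow> (nat \<times> nat) set" where
  "adj i = {(a, b). a \<in> Dnodes i \<and> b \<in> Dnodes i \<and> a \<noteq> b \<and> ip (sr a) (sr b) \<noteq> 0}"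

(* connected components of the Dynkin diagram of L(i): the simple roots of R_1,...,R_l *)
definition comps :: "nat \<Rightarrow> nat set set" where
  "comps i = {{b \<in> Dnodes i. (a, b) \<in> (adj i)\<^sup>*} | a. a \<in> Dnodes i}"

definition Rlat :: "nat set \<Rightarrow> lat set" where
  "Rlat C = {lcomb c C | c. True}"

definition PhiR :: "nat set \<Rightarrow> lat set" where
  "PhiR C = {x \<in> Rlat C. ip x x = 2}"

definition PhiPos :: "nat set \<Rightarrow> lat set" where
  "PhiPos C = {x \<in> PhiR C. \<exists>c. (\<forall>j\<in>C. c j \<ge> 0) \<and> x = lcomb c C}"

definition refl :: "lat \<Rightarrow> lat \<Rightarrow> lat" where
  "refl a x = (\<lambda>k. x k - ip x a * a k)"

definition cox :: "nat set \<Rightarrow> lat \<Rightarrow> lat" where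
  "cox C = foldr (\<lambda>j f. refl (sr j) \<circ> f) (sorted_list_of_set C) id"

definition coxnum :: "nat set \<Rightarrow> nat" where
  "coxnum C = (LEAST m. m > 0 \<and> (\<forall>x\<in>E8. (cox C ^^ m) x = x))"

section \<open>The lattice VOA V_{sqrt2 E8} = M(1) (x) C[sqrt2 E8]\<close>

(* basis vector (M, g) = prod_{(a,n) in M} alpha_a(-n) (x) e^{sqrt2 g} *)
type_synonym bas = "(nat \<times> nat) multiset \<times> lat"
type_synonym vvec = "bas \<Rightarrow> complex"

definition validbas :: "bas set" where
  "validbas = {(M, g). (\<forall>p\<in>#M. fst p \<in> {1..8} \<and> snd p \<ge> 1) \<and> g \<in> E8}"

definition supp :: "vvec \<Rightarrow> bas set" where "supp v = {b. v b \<noteq> 0}"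

definition VE8 :: "vvec set" where
  "VE8 = {v. finite (supp v) \<and> supp v \<subseteq> validbas}"

definition bvec :: "bas \<Rightarrow> vvec" where
  "bvec b = (\<lambda>b'. if b' = b then 1 else 0)"

definition extend :: "(bas \<Rightarrow> vvec) \<Rightarrow> vvec \<Rightarrow> vvec" where
  "extend T v = (\<lambda>b'. \<Sum>b\<in>supp v. v b * T b b')"

(* Heisenberg operator alpha_a(m) on basis vectors; h = C (x) sqrt2 E8 with the form of E8 *)
definition heis_b :: "nat \<Rightarrow> int \<Rightarrow> bas \<Rightarrow> vvec" where
  "heis_b a m b = (case b of (M, g) \<Rightarrow>
     if m < 0 then bvec (M + {#(a, nat (- m))#}, g)
     else if m = 0 then (\<lambda>b'. complex_of_real (sqrt 2) * of_int (ip (sr a) g) * bvec (M, g) b')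
     else (\<lambda>b'. \<Sum>p\<in>set_mset M. if snd p = nat m
            then of_int m * of_int (ip (sr a) (sr (fst p))) * of_nat (count M p) * bvec (M - {#p#}, g) b'
            else 0))"

definition heis :: "nat \<Rightarrow> int \<Rightarrow> vvec \<Rightarrow> vvec" where
  "heis a m = extend (heis_b a m)"

(* x(m) for x = sum_a c a * alpha_a in h *)
definition hmode :: "(nat \<Rightarrow> complex) \<Rightarrow> int \<Rightarrow> vvec \<Rightarrow> vvec" where
  "hmode c m v = (\<lambda>b. \<Sum>a=1..8. c a * heis a m v b)"

(* coefficient of z^p in E^-(-x,z) = exp(sum_{r>0} x(-r)/r z^r) *)
definition Eminus :: "(nat \<Rightarrow> complex) \<Rightarrow> nat \<Rightarrow> vvec \<Rightarrow> vvec" where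
  "Eminus c p v = (\<lambda>b. \<Sum>rs\<in>{rs. set rs \<subseteq> {1..p} \<and> sum_list rs = p}.
      (1 / fact (length rs)) * prod_list (map (\<lambda>r. 1 / of_nat r) rs)
      * foldr (\<lambda>r f. hmode c (- int r) \<circ> f) rs id v b)"

(* coefficient of z^(-q) in E^+(-x,z) = exp(- sum_{r>0} x(r)/r z^(-r)) *)
definition Eplus :: "(nat \<Rightarrow> complex) \<Rightarrow> nat \<Rightarrow> vvec \<Rightarrow> vvec" where
  "Eplus c q v = (\<lambda>b. \<Sum>rs\<in>{rs. set rs \<subseteq> {1..q} \<and> sum_list rs = q}.
      (1 / fact (length rs)) * prod_list (map (\<lambda>r. - 1 / of_nat r) rs)
      * foldr (\<lambda>r f. hmode c (int r) \<circ> f) rs id v b)"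

(* e^{sqrt2 beta} acting on the group algebra part (no cocycle) *)
definition shift :: "lat \<Rightarrow> vvec \<Rightarrow> vvec" where
  "shift \<beta> v = (\<lambda>(M, g). v (M, (\<lambda>k. g k - \<beta> k)))"

definition deg :: "(nat \<times> nat) multiset \<Rightarrow> nat" where
  "deg M = (\<Sum>p\<in>#M. snd p)"

definition hprod :: "((nat \<times> nat) list) \<Rightarrow> int list \<Rightarrow> nat list \<Rightarrow> vvec \<Rightarrow> vvec" where
  "hprod xs ms js = foldr (\<lambda>j f. heis (fst (xs ! j)) (ms ! j) \<circ> f) js id"

(* Component (v_bv)_N applied to basis vector bw, where
   Y(prod_j alpha_{a_j}(-n_j) e^{sqrt2 beta}, z)
     = : prod_j (1/(n_j-1)!) d^{n_j-1} alpha_{a_j}(z)  E^-(-sqrt2 beta,z) E^+(-sqrt2 beta,z) e^{sqrt2 beta} z^{sqrt2 beta} :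
   The summation box is large enough to contain every nonzero contribution. *)
definition Ybas :: "bas \<Rightarrow> int \<Rightarrow> bas \<Rightarrow> vvec" where
  "Ybas bv N bw = (case bv of (Mv, \<beta>) \<Rightarrow> case bw of (Mw, \<gamma>) \<Rightarrow>
     let xs = sorted_list_of_multiset Mv; k = length xs; c = 2 * ip \<beta> \<gamma>;
         B = nat (\<bar>N\<bar> + 1 + \<bar>c\<bar> + 2 * int (deg Mw) + int (deg Mv));
         sb = (\<lambda>a. complex_of_real (sqrt 2) * of_int (\<beta> a))
     in (\<lambda>b. \<Sum>(ms, p, q)\<in>{(ms, p, q). length ms = k \<and> set ms \<subseteq> {- int B..int B} \<and> p \<le> B \<and> q \<le> B
                \<and> (\<Sum>j<k. - (ms ! j) - int (snd (xs ! j))) + int p - int q + c = - N - 1}.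
          (\<Prod>j<k. (of_int (- (ms ! j) - 1) :: complex) gchoose (snd (xs ! j) - 1))
          * (hprod xs ms (filter (\<lambda>j. ms ! j < 0) [0..<k])
               (Eminus sb p (Eplus sb q (shift \<beta>
                 (hprod xs ms (filter (\<lambda>j. ms ! j \<ge> 0) [0..<k]) (bvec (Mw, \<gamma>)))))) b)))"

(* v_N w, bilinear in v and w *)
definition Ymode :: "vvec \<Rightarrow> int \<Rightarrow> vvec \<Rightarrow> vvec" where
  "Ymode v N w = (\<lambda>b. \<Sum>bv\<in>supp v. \<Sum>bw\<in>supp w. v bv * w bw * Ybas bv N bw b)"

definition cartan_inv :: "nat \<Rightarrow> nat \<Rightarrow> complex" where
  "cartan_inv = (THE X. (\<forall>a\<in>{1..8}. \<forall>b\<in>{1..8}.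
        (\<Sum>c=1..8. of_int (gram a c) * X c b) = (if a = b then 1 else 0))
      \<and> (\<forall>a b. a \<notin> {1..8} \<or> b \<notin> {1..8} \<longrightarrow> X a b = 0))"

definition vac_lat :: lat where "vac_lat = (\<lambda>_. 0)"

definition omega :: vvec where
  "omega = (\<lambda>bb. (1/2) * (\<Sum>a=1..8. \<Sum>b=1..8. cartan_inv a b * bvec ({#(a,1), (b,1)#}, vac_lat) bb))"

(* x(-1)^2 . 1 *)
definition hh :: "lat \<Rightarrow> vvec" where
  "hh x = (\<lambda>bb. \<Sum>a=1..8. \<Sum>b=1..8. of_int (x a * x b) * bvec ({#(a,1), (b,1)#}, vac_lat) bb)"

definition ee :: "lat \<Rightarrow> vvec" where "ee x = bvec ({#}, x)"

definition svec :: "nat set \<Rightarrow> vvec" where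
  "svec C = (\<lambda>bb. (1 / (2 * (of_nat (coxnum C) + 2))) *
      (\<Sum>x\<in>PhiPos C. hh x bb - 2 * (ee x bb + ee (neg x) bb)))"

definition Uspace :: "nat \<Rightarrow> vvec set" where
  "Uspace i = {v \<in> VE8. \<forall>C\<in>comps i. Ymode (svec C) 1 v = (\<lambda>_. 0)}"

definition xi :: "nat \<Rightarrow> complex" where
  "xi i = cis (2 * pi / real (nn i))"

definition coset_idx :: "nat \<Rightarrow> lat \<Rightarrow> nat" where
  "coset_idx i g = (THE j. j < nn i \<and> (\<lambda>k. g k - int j * sr i k) \<in> Lsub i)"

definition sigma :: "nat \<Rightarrow> vvec \<Rightarrow> vvec" where
  "sigma i v = (\<lambda>b. xi i ^ coset_idx i (snd b) * v b)"

definition Hset :: "nat \<Rightarrow> nat \<Rightarrow> lat set" where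
  "Hset i j = {x. (\<lambda>k. x k - int j * sr i k) \<in> Lsub i \<and> ip x x = 2}"

definition Xvec :: "nat \<Rightarrow> nat \<Rightarrow> vvec" where
  "Xvec i j = (\<lambda>bb. \<Sum>x\<in>Hset i j. ee x bb)"

definition ehat :: vvec where
  "ehat = (\<lambda>bb. omega bb / 16 + (\<Sum>x\<in>PhiE8. ee x bb) / 32)"

end

theory Submission
  imports Defs
begin

text \<open>
  For a root \<open>x\<close> let \<open>t\<^sub>x = x(-1)\<^sup>2 1 - 2 (e\<^bsup>\<surd>2 x\<^esup> + e\<^bsup>-\<surd>2 x\<^esup>)\<close>
  (\<open>tvec\<close>). Each \<open>s(\<Phi>\<^sub>k)\<close> is a multiple of the sum of the \<open>t\<^sub>x\<close> over the positive
  roots of \<open>R\<^sub>k\<close>, so it suffices to show \<open>(t\<^sub>x)\<^sub>1 v = 0\<close> for every root \<open>x\<close> of \<open>L\<close>.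
  All vectors in question are combinations of \<open>\<omega>\<close> and of \<open>\<Sum>\<^sub>\<gamma> w(\<gamma>) e\<^bsup>\<surd>2 \<gamma>\<^esup>\<close>, summed over
  the roots \<open>\<gamma>\<close> of \<open>E\<^sub>8\<close>, with weights \<open>w\<close> that are constant on the cosets of \<open>L\<close>.
  A direct computation with the lattice vertex operators gives \<open>(t\<^sub>x)\<^sub>1 \<omega> = 2 t\<^sub>x\<close>.
  Inner products of roots lie in \<open>{-2..2}\<close>, and \<open>\<gamma> \<mapsto> \<gamma> + x\<close> maps the roots with
  \<open>\<langle>x,\<gamma>\<rangle> = -1\<close> onto those with \<open>\<langle>x,\<gamma>\<rangle> = 1\<close>; together with the invariance of \<open>w\<close>
  under translation by \<open>L\<close> this gives \<open>(t\<^sub>x)\<^sub>1 \<Sum>\<^sub>\<gamma> w(\<gamma>) e\<^bsup>\<surd>2 \<gamma>\<^esup> = -4 w(x) t\<^sub>x\<close>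
  whenever \<open>w(x) = w(-x)\<close>. For \<open>X\<^sup>j\<close> the weight vanishes on \<open>L\<close>. For \<^const>\<open>ehat\<close> and its
  image under \<open>\<sigma>\<close> it equals \<open>1/32\<close> on \<open>L\<close>, and the term \<open>\<omega>/16\<close> contributes \<open>t\<^sub>x/8\<close>,
  which cancels \<open>-4 t\<^sub>x/32\<close>.
\<close>

section \<open>The lattice \<open>E\<^sub>8\<close>\<close>

lemma atLeastAtMost_1_8: "{1..8::nat} = {1,2,3,4,5,6,7,8}"
  by auto

lemma mem_1_8: "a \<in> {1..8::nat} \<longleftrightarrow> a = 1 \<or> a = 2 \<or> a = 3 \<or> a = 4 \<or> a = 5 \<or> a = 6 \<or> a = 7 \<or> a = 8"
  by auto

lemma sum_1_8: "(\<Sum>a\<in>{1..8::nat}. f a) = f 1 + f 2 + f 3 + f 4 + f 5 + f 6 + f 7 + (f 8 :: 'a::comm_monoid_add)"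
  unfolding atLeastAtMost_1_8 by (simp add: add.assoc)

lemma gram_rows:
  "gram 1 b = (if b = 1 then 2 else if b = 2 then -1 else 0)"
  "gram 2 b = (if b = 2 then 2 else if b = 1 \<or> b = 3 then -1 else 0)"
  "gram 3 b = (if b = 3 then 2 else if b = 2 \<or> b = 4 then -1 else 0)"
  "gram 4 b = (if b = 4 then 2 else if b = 3 \<or> b = 5 then -1 else 0)"
  "gram 5 b = (if b = 5 then 2 else if b = 4 \<or> b = 6 \<or> b = 8 then -1 else 0)"
  "gram 6 b = (if b = 6 then 2 else if b = 5 \<or> b = 7 then -1 else 0)"
  "gram 7 b = (if b = 7 then 2 else if b = 6 then -1 else 0)"
  "gram 8 b = (if b = 8 then 2 else if b = 5 then -1 else 0)"
  by (auto simp: gram_def doubleton_eq_iff)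

lemma gram_commute: "gram a b = gram b a"
  by (auto simp: gram_def)

lemma ip_expand: "ip x y =
   2*x 1*y 1 + 2*x 2*y 2 + 2*x 3*y 3 + 2*x 4*y 4 + 2*x 5*y 5 + 2*x 6*y 6 + 2*x 7*y 7 + 2*x 8*y 8
  - x 1*y 2 - x 2*y 1 - x 2*y 3 - x 3*y 2 - x 3*y 4 - x 4*y 3 - x 4*y 5 - x 5*y 4
  - x 5*y 6 - x 6*y 5 - x 6*y 7 - x 7*y 6 - x 5*y 8 - x 8*y 5"
  unfolding ip_def sum_1_8 gram_rows by (simp add: algebra_simps)

lemma ip_sum_of_squares: "4 * ip y y = (-2*y 6 + y 7 + 2*y 8)^2 + (-2*y 5 + 2*y 6 - y 7 + 2*y 8)^2
  + (-2*y 4 + 2*y 5 - y 7)^2 + (-2*y 3 + 2*y 4 - y 7)^2 + (-2*y 2 + 2*y 3 - y 7)^2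
  + (-2*y 1 + 2*y 2 - y 7)^2 + (2*y 1 - y 7)^2 + (y 7)^2"
  unfolding ip_expand by (simp add: power2_eq_square algebra_simps)

lemma E8_iff: "x \<in> E8 \<longleftrightarrow> (\<forall>k. k \<notin> {1..8} \<longrightarrow> x k = 0)"
  by (simp add: E8_def)

lemma E8_add: "x \<in> E8 \<Longrightarrow> y \<in> E8 \<Longrightarrow> (\<lambda>k. x k + y k) \<in> E8"
  by (simp add: E8_iff)

lemma E8_diff: "x \<in> E8 \<Longrightarrow> y \<in> E8 \<Longrightarrow> (\<lambda>k. x k - y k) \<in> E8"
  by (simp add: E8_iff)

lemma E8_neg: "x \<in> E8 \<Longrightarrow> neg x \<in> E8"
  by (simp add: E8_iff neg_def)

lemma ip_self_nonneg: "0 \<le> ip y y"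
proof -
  have "0 \<le> 4 * ip y y"
    unfolding ip_sum_of_squares by (intro add_nonneg_nonneg) auto
  then show ?thesis by simp
qed

lemma ip_self_eq_0: assumes "x \<in> E8" "ip x x = 0" shows "x = (\<lambda>_. 0)"
proof -
  have "(-2*x 6 + x 7 + 2*x 8) = 0 \<and> (-2*x 5 + 2*x 6 - x 7 + 2*x 8) = 0
    \<and> (-2*x 4 + 2*x 5 - x 7) = 0 \<and> (-2*x 3 + 2*x 4 - x 7) = 0 \<and> (-2*x 2 + 2*x 3 - x 7) = 0
    \<and> (-2*x 1 + 2*x 2 - x 7) = 0 \<and> (2*x 1 - x 7) = 0 \<and> x 7 = 0"
    using ip_sum_of_squares[of x] assms(2) by (simp add: add_nonneg_eq_0_iff)
  then have "\<forall>k\<in>{1..8}. x k = 0"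
    unfolding atLeastAtMost_1_8 by auto
  then show ?thesis
    using assms(1) unfolding E8_iff by (metis ext)
qed

lemma ip_add_left: "ip (\<lambda>k. x k + y k) z = ip x z + ip y z"
  by (simp add: ip_expand algebra_simps)

lemma ip_add_right: "ip z (\<lambda>k. x k + y k) = ip z x + ip z y"
  by (simp add: ip_expand algebra_simps)

lemma ip_diff_left: "ip (\<lambda>k. x k - y k) z = ip x z - ip y z"
  by (simp add: ip_expand algebra_simps)

lemma ip_diff_right: "ip z (\<lambda>k. x k - y k) = ip z x - ip z y"
  by (simp add: ip_expand algebra_simps)

lemma ip_commute: "ip x y = ip y x"
  by (simp add: ip_expand algebra_simps)

lemma ip_neg_left: "ip (neg x) y = - ip x y"
  by (simp add: ip_expand neg_def algebra_simps)

lemma ip_neg_right: "ip y (neg x) = - ip y x"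
  by (simp add: ip_expand neg_def algebra_simps)

lemma neg_neg: "neg (neg x) = x"
  by (simp add: neg_def)

lemma PhiE8_D: "x \<in> PhiE8 \<Longrightarrow> x \<in> E8" "x \<in> PhiE8 \<Longrightarrow> ip x x = 2"
  by (simp_all add: PhiE8_def)

lemma PhiE8_neg: "\<gamma> \<in> PhiE8 \<Longrightarrow> neg \<gamma> \<in> PhiE8"
  by (simp add: PhiE8_def E8_neg ip_neg_left ip_neg_right)

text \<open>Cauchy-Schwarz for roots, via \<open>\<langle>x \<plusminus> y, x \<plusminus> y\<rangle> = 4 \<plusminus> 2\<langle>x,y\<rangle> \<ge> 0\<close>.\<close>

lemma root_ip_bounds:
  assumes x: "x \<in> PhiE8" and y: "y \<in> PhiE8"
  shows "-2 \<le> ip x y" "ip x y \<le> 2" "ip x y = 2 \<Longrightarrow> y = x" "ip x y = -2 \<Longrightarrow> y = neg x"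
proof -
  have xe: "x \<in> E8" "ip x x = 2" and ye: "y \<in> E8" "ip y y = 2"
    using x y by (simp_all add: PhiE8_D)
  define d where "d = (\<lambda>k. x k - y k)"
  define s where "s = (\<lambda>k. x k + y k)"
  have dd: "ip d d = 4 - 2 * ip x y"
    unfolding d_def using xe ye by (simp add: ip_diff_left ip_diff_right ip_commute[of y x])
  have ss: "ip s s = 4 + 2 * ip x y"
    unfolding s_def using xe ye by (simp add: ip_add_left ip_add_right ip_commute[of y x])
  show "-2 \<le> ip x y" using ip_self_nonneg[of s] ss by simp
  show "ip x y \<le> 2" using ip_self_nonneg[of d] dd by simp
  show "y = x" if "ip x y = 2"
  proof -
    have "d = (\<lambda>_. 0)" using ip_self_eq_0[of d] dd that xe ye unfolding d_def by (simp add: E8_diff)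
    then show "y = x" unfolding d_def by (metis eq_iff_diff_eq_0 ext)
  qed
  show "y = neg x" if "ip x y = -2"
  proof -
    have "s = (\<lambda>_. 0)" using ip_self_eq_0[of s] ss that xe ye unfolding s_def by (simp add: E8_add)
    then show "y = neg x" unfolding s_def neg_def by (metis add_eq_0_iff ext)
  qed
qed

lemma root_ip_eq_2_iff: assumes "x \<in> PhiE8" "y \<in> PhiE8" shows "ip x y = 2 \<longleftrightarrow> y = x"
  using root_ip_bounds(3)[OF assms] PhiE8_D(2)[OF assms(1)] by blast

lemma root_ip_eq_neg2_iff: assumes "x \<in> PhiE8" "y \<in> PhiE8" shows "ip x y = -2 \<longleftrightarrow> y = neg x"
  using root_ip_bounds(4)[OF assms] PhiE8_D(2)[OF assms(1)] by (auto simp: ip_neg_right)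

lemma int_square_le_8: fixes s :: int assumes "s^2 \<le> 8" shows "-2 \<le> s \<and> s \<le> 2"
proof (rule ccontr)
  assume "\<not> (-2 \<le> s \<and> s \<le> 2)"
  then have "3 \<le> \<bar>s\<bar>" by auto
  then have "3 * 3 \<le> \<bar>s\<bar> * \<bar>s\<bar>" using mult_mono[of 3 "\<bar>s\<bar>" 3 "\<bar>s\<bar>"] by simp
  then show False using assms by (simp add: power2_eq_square)
qed

lemma PhiE8_coord_bound: assumes "y \<in> PhiE8" "k \<in> {1..8}" shows "y k \<in> {-10..10}"
proof -
  have S: "(-2*y 6 + y 7 + 2*y 8)^2 + (-2*y 5 + 2*y 6 - y 7 + 2*y 8)^2
  + (-2*y 4 + 2*y 5 - y 7)^2 + (-2*y 3 + 2*y 4 - y 7)^2 + (-2*y 2 + 2*y 3 - y 7)^2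
  + (-2*y 1 + 2*y 2 - y 7)^2 + (2*y 1 - y 7)^2 + (y 7)^2 = 8"
    using ip_sum_of_squares[of y] PhiE8_D(2)[OF assms(1)] by simp
  have nn: "\<And>t::int. t^2 \<ge> 0" by simp
  have "-2 \<le> (-2*y 6 + y 7 + 2*y 8) \<and> (-2*y 6 + y 7 + 2*y 8) \<le> 2"
    "-2 \<le> (-2*y 5 + 2*y 6 - y 7 + 2*y 8) \<and> (-2*y 5 + 2*y 6 - y 7 + 2*y 8) \<le> 2"
    "-2 \<le> (-2*y 4 + 2*y 5 - y 7) \<and> (-2*y 4 + 2*y 5 - y 7) \<le> 2"
    "-2 \<le> (-2*y 3 + 2*y 4 - y 7) \<and> (-2*y 3 + 2*y 4 - y 7) \<le> 2"
    "-2 \<le> (-2*y 2 + 2*y 3 - y 7) \<and> (-2*y 2 + 2*y 3 - y 7) \<le> 2"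
    "-2 \<le> (-2*y 1 + 2*y 2 - y 7) \<and> (-2*y 1 + 2*y 2 - y 7) \<le> 2"
    "-2 \<le> (2*y 1 - y 7) \<and> (2*y 1 - y 7) \<le> 2"
    "-2 \<le> (y 7) \<and> (y 7) \<le> 2"
    by (rule int_square_le_8, use S nn in smt)+
  then show ?thesis
    using assms(2) unfolding mem_1_8 by (elim disjE) (simp; linarith)+
qed

lemma finite_PhiE8: "finite PhiE8"
proof (rule finite_subset)
  let ?F = "{f::lat. \<forall>x. (x \<in> {1..8} \<longrightarrow> f x \<in> {-10..10}) \<and> (x \<notin> {1..8} \<longrightarrow> f x = 0)}"
  show "PhiE8 \<subseteq> ?F"
    using PhiE8_coord_bound by (auto simp: PhiE8_def E8_iff)
  show "finite ?F"
    by (rule finite_set_of_finite_funs) auto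
qed

lemma root_translation_bij:
  assumes x: "x \<in> PhiE8"
  shows "bij_betw (\<lambda>\<gamma> k. \<gamma> k + x k) {\<gamma> \<in> PhiE8. ip x \<gamma> = -1} {\<delta> \<in> PhiE8. ip x \<delta> = 1}"
proof (rule bij_betw_byWitness[where f' = "\<lambda>\<delta> k. \<delta> k - x k"])
  have xe: "x \<in> E8" "ip x x = 2" using x by (simp_all add: PhiE8_D)
  show "(\<lambda>\<gamma> k. \<gamma> k + x k) ` {\<gamma> \<in> PhiE8. ip x \<gamma> = -1} \<subseteq> {\<delta> \<in> PhiE8. ip x \<delta> = 1}"
  proof (rule image_subsetI)
    fix \<gamma> assume "\<gamma> \<in> {\<gamma> \<in> PhiE8. ip x \<gamma> = -1}"
    then show "(\<lambda>k. \<gamma> k + x k) \<in> {\<delta> \<in> PhiE8. ip x \<delta> = 1}"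
      using xe by (simp add: PhiE8_def E8_add ip_add_left ip_add_right ip_commute[of \<gamma> x])
  qed
  show "(\<lambda>\<delta> k. \<delta> k - x k) ` {\<delta> \<in> PhiE8. ip x \<delta> = 1} \<subseteq> {\<gamma> \<in> PhiE8. ip x \<gamma> = -1}"
  proof (rule image_subsetI)
    fix \<delta> assume "\<delta> \<in> {\<delta> \<in> PhiE8. ip x \<delta> = 1}"
    then show "(\<lambda>k. \<delta> k - x k) \<in> {\<gamma> \<in> PhiE8. ip x \<gamma> = -1}"
      using xe by (simp add: PhiE8_def E8_diff ip_diff_left ip_diff_right ip_commute[of \<delta> x])
  qed
qed simp_all

section \<open>The sublattice \<open>L(i)\<close> and its cosets\<close>

lemma nn_0: "nn 0 = 1"
  by (simp add: nn_def)

lemma nn_ge_1: "i \<le> 8 \<Longrightarrow> 1 \<le> nn i"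
  by (auto simp: nn_def numeral_eq_Suc less_Suc_eq_le le_Suc_eq)

lemma nn_eq_hr: "1 \<le> i \<Longrightarrow> i \<le> 8 \<Longrightarrow> int (nn i) = hr i"
  by (auto simp: nn_def hr_def numeral_eq_Suc le_Suc_eq)

lemma sr_simple: "1 \<le> j \<Longrightarrow> sr j k = (if k = j then 1 else 0)"
  by (simp add: sr_def)

lemma sr_0: "sr 0 k = - hr k"
  by (simp add: sr_def)

lemma sr_E8: "j \<le> 8 \<Longrightarrow> sr j \<in> E8"
  by (auto simp: E8_iff sr_def hr_def)

lemma lcomb_E8: assumes "C \<subseteq> {0..8}" shows "lcomb c C \<in> E8"
proof -
  have "sr j k = 0" if "j \<in> C" "k \<notin> {1..8}" for j k
    using sr_E8[of j] that assms by (auto simp: E8_iff)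
  then show ?thesis by (simp add: E8_iff lcomb_def)
qed

text \<open>The \<open>i\<close>-th coordinate of \<open>\<alpha>\<^sub>0 = -\<Sum> n\<^sub>k \<alpha>\<^sub>k\<close> is \<open>-n\<^sub>i\<close>, and the other \<open>\<alpha>\<^sub>j\<close> with \<open>j \<noteq> i\<close> have none.\<close>

lemma lcomb_coord_dvd:
  assumes i: "i \<le> 8" and C: "C \<subseteq> {0..8} - {i}"
  shows "int (nn i) dvd lcomb c C i"
proof (cases "i = 0")
  case True then show ?thesis by (simp add: nn_0)
next
  case False
  have "int (nn i) dvd c j * sr j i" if "j \<in> C" for j
  proof (cases "j = 0")
    case True
    then have "sr j i = - int (nn i)" using nn_eq_hr[of i] False i by (simp add: sr_0)
    then show ?thesis by simp
  next
    case False
    then have "sr j i = 0" using that C by (auto simp: sr_simple)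
    then show ?thesis by simp
  qed
  then show ?thesis unfolding lcomb_def by (rule dvd_sum)
qed

lemma Lsub_intro:
  assumes i: "i \<le> 8" and x: "x \<in> E8" and dvd: "int (nn i) dvd x i"
  shows "x \<in> Lsub i"
proof (cases "i = 0")
  case True
  have "lcomb x ({0..8} - {i}) k = x k" for k
  proof -
    have "lcomb x ({0..8} - {i}) k = (\<Sum>j\<in>{1..8}. if k = j then x j else 0)"
      unfolding lcomb_def using True by (intro sum.cong) (auto simp: sr_simple)
    then show ?thesis using x by (auto simp: E8_iff)
  qed
  then have "x = lcomb x ({0..8} - {i})" by (simp add: fun_eq_iff)
  then show ?thesis unfolding Lsub_def by blast
next
  case False
  then have i1: "1 \<le> i" by simp
  obtain t where t: "x i = hr i * t" using dvd nn_eq_hr[OF i1 i] by (auto elim: dvdE)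
  define c where "c = (\<lambda>j. if j = 0 then - t else x j - t * hr j)"
  have "lcomb c ({0..8} - {i}) k = x k" for k
  proof -
    have D: "{0..8} - {i} = insert 0 ({1..8} - {i})" using False by auto
    have "lcomb c ({0..8} - {i}) k = c 0 * sr 0 k + (\<Sum>j\<in>{1..8} - {i}. c j * sr j k)"
      unfolding lcomb_def D by (subst sum.insert) auto
    also have "(\<Sum>j\<in>{1..8} - {i}. c j * sr j k) = (\<Sum>j\<in>{1..8} - {i}. if k = j then c j else 0)"
      by (rule sum.cong) (auto simp: sr_simple)
    also have "(\<Sum>j\<in>{1..8} - {i}. if k = j then c j else 0) = (if k \<in> {1..8} - {i} then c k else 0)"
      by (simp add: sum.delta)
    also have "c 0 * sr 0 k = t * hr k"
      by (simp add: c_def sr_0)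
    also have "t * hr k + (if k \<in> {1..8} - {i} then c k else 0) = x k"
      using t x i1 by (cases "k \<in> {1..8}") (auto simp: c_def E8_iff hr_def)
    finally show ?thesis .
  qed
  then have "x = lcomb c ({0..8} - {i})" by (simp add: fun_eq_iff)
  then show ?thesis unfolding Lsub_def by blast
qed

lemma Lsub_iff: "i \<le> 8 \<Longrightarrow> x \<in> Lsub i \<longleftrightarrow> x \<in> E8 \<and> int (nn i) dvd x i"
  using lcomb_E8[of "{0..8} - {i}"] lcomb_coord_dvd[of i "{0..8} - {i}"] Lsub_intro
  by (auto simp: Lsub_def)

lemma Lsub_neg: "i \<le> 8 \<Longrightarrow> x \<in> Lsub i \<Longrightarrow> neg x \<in> Lsub i"
  by (simp add: Lsub_iff E8_iff neg_def)

lemma coset_idx_eq: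
  assumes i: "i \<le> 8" and g: "g \<in> E8"
  shows "coset_idx i g = nat (g i mod int (nn i))"
  unfolding coset_idx_def
proof (rule the_equality)
  have np: "0 < int (nn i)" using nn_ge_1[OF i] by simp
  have in_L: "(\<lambda>k. g k - int j * sr i k) \<in> Lsub i \<longleftrightarrow> int (nn i) dvd g i - int j" for j
  proof -
    have "(\<lambda>k. g k - int j * sr i k) \<in> E8" using g sr_E8[OF i] by (simp add: E8_iff)
    moreover have "int (nn i) dvd g i - int j * sr i i \<longleftrightarrow> int (nn i) dvd g i - int j"
      by (cases "i = 0") (simp_all add: nn_0 sr_simple)
    ultimately show ?thesis using Lsub_iff[OF i] by simp
  qed
  show "nat (g i mod int (nn i)) < nn i \<and>
      (\<lambda>k. g k - int (nat (g i mod int (nn i))) * sr i k) \<in> Lsub i"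
    using np in_L[of "nat (g i mod int (nn i))"] by (simp add: nat_less_iff mod_eq_dvd_iff[symmetric])
  fix j assume "j < nn i \<and> (\<lambda>k. g k - int j * sr i k) \<in> Lsub i"
  then have j: "j < nn i" and "int (nn i) dvd g i - int j" by (simp_all add: in_L)
  then have "g i mod int (nn i) = int j mod int (nn i)" by (simp only: mod_eq_dvd_iff)
  also have "\<dots> = int j" using j by simp
  finally show "j = nat (g i mod int (nn i))" by simp
qed

lemma coset_idx_Lsub: "i \<le> 8 \<Longrightarrow> y \<in> Lsub i \<Longrightarrow> coset_idx i y = 0"
  by (simp add: Lsub_iff coset_idx_eq dvd_imp_mod_0)

lemma coset_idx_add_Lsub:
  assumes i: "i \<le> 8" and g: "g \<in> E8" and y: "y \<in> Lsub i"
  shows "coset_idx i (\<lambda>k. g k + y k) = coset_idx i g"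
proof -
  have y': "y \<in> E8" "int (nn i) dvd y i" using y Lsub_iff[OF i] by auto
  then have "(g i + y i) mod int (nn i) = g i mod int (nn i)"
    by (simp add: mod_add_right_eq[symmetric] dvd_imp_mod_0)
  then show ?thesis using coset_idx_eq[OF i g] coset_idx_eq[OF i E8_add[OF g y'(1)]] by simp
qed

lemma Hset_subset_PhiE8: "i \<le> 8 \<Longrightarrow> Hset i j \<subseteq> PhiE8"
  using sr_E8[of i] by (auto simp: Hset_def PhiE8_def Lsub_iff E8_iff)

lemma Hset_add_Lsub_iff:
  assumes i: "i \<le> 8" and g: "g \<in> PhiE8" and gy: "(\<lambda>k. g k + y k) \<in> PhiE8" and y: "y \<in> Lsub i"
  shows "(\<lambda>k. g k + y k) \<in> Hset i j \<longleftrightarrow> g \<in> Hset i j"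
proof -
  have y': "y \<in> E8" "int (nn i) dvd y i" using y Lsub_iff[OF i] by auto
  have "int (nn i) dvd (g i - int j * sr i i) + y i \<longleftrightarrow> int (nn i) dvd g i - int j * sr i i"
    by (rule dvd_add_left_iff[OF y'(2)])
  then show ?thesis
    using g gy y'(1) sr_E8[OF i] by (simp add: Hset_def Lsub_iff[OF i] PhiE8_def E8_iff algebra_simps)
qed

lemma Lsub_disjoint_Hset:
  assumes i: "i \<le> 8" and j: "j \<in> {1..<nn i}" and y: "y \<in> Lsub i"
  shows "y \<notin> Hset i j"
proof
  assume "y \<in> Hset i j"
  have "i \<noteq> 0" using j nn_0 by (cases i) auto
  then have d1: "int (nn i) dvd y i - int j"
    using \<open>y \<in> Hset i j\<close> Lsub_iff[OF i] by (simp add: Hset_def sr_simple)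
  have d2: "int (nn i) dvd y i" using y Lsub_iff[OF i] by simp
  have "int (nn i) dvd int j" using dvd_diff[OF d2 d1] by simp
  then have "nn i dvd j" by simp
  then show False using j nat_dvd_not_less[of j "nn i"] by simp
qed

lemma PhiPos_comps_root:
  assumes i: "i \<le> 8" and C: "C \<in> comps i" and x: "x \<in> PhiPos C"
  shows "x \<in> PhiE8" "x \<in> Lsub i"
proof -
  have Cs: "C \<subseteq> {0..8} - {i}" using C by (auto simp: comps_def Dnodes_def)
  obtain c where xc: "x = lcomb c C" and xx: "ip x x = 2"
    using x by (auto simp: PhiPos_def PhiR_def Rlat_def)
  have "x \<in> E8" unfolding xc by (rule lcomb_E8) (use Cs in auto)
  then show "x \<in> PhiE8" "x \<in> Lsub i"
    using xx lcomb_coord_dvd[OF i Cs] by (simp_all add: PhiE8_def Lsub_iff[OF i] xc)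
qed

lemma supp_bvec: "supp (bvec b) = {b}"
  by (auto simp: supp_def bvec_def)

lemma supp_sum_subset: "supp (\<lambda>b. \<Sum>k\<in>K. f k b) \<subseteq> (\<Union>k\<in>K. supp (f k))"
proof
  fix b assume "b \<in> supp (\<lambda>b. \<Sum>k\<in>K. f k b)"
  then have "(\<Sum>k\<in>K. f k b) \<noteq> 0" by (simp add: supp_def)
  then obtain k where "k \<in> K" "f k b \<noteq> 0" by (rule sum.not_neutral_contains_not_neutral)
  then show "b \<in> (\<Union>k\<in>K. supp (f k))" by (auto simp: supp_def)
qed

lemma finite_supp_sum:
  "finite K \<Longrightarrow> \<forall>k\<in>K. finite (supp (f k)) \<Longrightarrow> finite (supp (\<lambda>b. \<Sum>k\<in>K. f k b))"
  by (rule finite_subset[OF supp_sum_subset]) auto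

lemma finite_supp_scale: "finite (supp f) \<Longrightarrow> finite (supp (\<lambda>b. c * f b))"
  by (rule finite_subset[of _ "supp f"]) (auto simp: supp_def)

lemma finite_supp_add: "finite (supp f) \<Longrightarrow> finite (supp g) \<Longrightarrow> finite (supp (\<lambda>b. f b + g b))"
  by (rule finite_subset[of _ "supp f \<union> supp g"]) (auto simp: supp_def)

lemma finite_supp_bvec: "finite (supp (bvec b))"
  by (simp add: supp_bvec)

lemma finite_supp_comb1: "finite K \<Longrightarrow> finite (supp (\<lambda>bb. \<Sum>k\<in>K. c k * bvec (g k) bb))"
  by (rule finite_supp_sum) (auto intro: finite_supp_scale finite_supp_bvec)

lemma finite_supp_comb2: "finite K \<Longrightarrow> finite L \<Longrightarrow> finite (supp (\<lambda>bb. \<Sum>k\<in>K. \<Sum>l\<in>L. c k l * bvec (g k l) bb))"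
  by (rule finite_supp_sum) (auto intro: finite_supp_comb1)

lemma extend_eq_sum_superset:
  assumes "finite A" "supp v \<subseteq> A"
  shows "extend T v b' = (\<Sum>b\<in>A. v b * T b b')"
  unfolding extend_def by (rule sum.mono_neutral_left) (use assms in \<open>auto simp: supp_def\<close>)

lemma extend_bvec: "extend T (bvec b) b' = T b b'"
  unfolding extend_def supp_bvec by (simp add: bvec_def)

lemma extend_zero: "extend T (\<lambda>_. 0) b' = 0"
  by (simp add: extend_def supp_def)

lemma extend_sum:
  assumes "finite K" "\<forall>k\<in>K. finite (supp (f k))"
  shows "extend T (\<lambda>b. \<Sum>k\<in>K. f k b) b' = (\<Sum>k\<in>K. extend T (f k) b')"
proof -
  let ?A = "\<Union>k\<in>K. supp (f k)"
  have fA: "finite ?A" using assms by auto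
  have "extend T (\<lambda>b. \<Sum>k\<in>K. f k b) b' = (\<Sum>b\<in>?A. (\<Sum>k\<in>K. f k b) * T b b')"
    by (rule extend_eq_sum_superset[OF fA supp_sum_subset])
  also have "\<dots> = (\<Sum>k\<in>K. \<Sum>b\<in>?A. f k b * T b b')"
    by (simp add: sum_distrib_right sum.swap[of _ ?A])
  also have "\<dots> = (\<Sum>k\<in>K. extend T (f k) b')"
    by (intro sum.cong refl extend_eq_sum_superset[symmetric] fA) auto
  finally show ?thesis .
qed

lemma extend_scale: "extend T (\<lambda>b. c * f b) b' = c * extend T f b'"
proof (cases "c = 0")
  case False
  then have "supp (\<lambda>b. c * f b) = supp f" by (auto simp: supp_def)
  then show ?thesis by (simp add: extend_def sum_distrib_left mult.assoc)
qed (simp add: extend_zero)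

lemma extend_add:
  assumes "finite (supp f)" "finite (supp g)"
  shows "extend T (\<lambda>b. f b + g b) b' = extend T f b' + extend T g b'"
proof -
  let ?A = "supp f \<union> supp g"
  have "supp (\<lambda>b. f b + g b) \<subseteq> ?A" by (auto simp: supp_def)
  then have "extend T (\<lambda>b. f b + g b) b' = (\<Sum>b\<in>?A. (f b + g b) * T b b')"
    using assms by (intro extend_eq_sum_superset) auto
  also have "\<dots> = (\<Sum>b\<in>?A. f b * T b b') + (\<Sum>b\<in>?A. g b * T b b')"
    by (simp add: distrib_right sum.distrib)
  also have "\<dots> = extend T f b' + extend T g b'"
    using extend_eq_sum_superset[of ?A f T b'] extend_eq_sum_superset[of ?A g T b'] assms by auto
  finally show ?thesis .
qed

section \<open>Heisenberg modes\<close>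

lemma heis_bvec: "heis a m (bvec b) = heis_b a m b"
  by (rule ext) (simp add: heis_def extend_bvec)

lemma heis_b_pos: "0 < m \<Longrightarrow> heis_b a m (M, g) = (\<lambda>b'. \<Sum>p\<in>set_mset M. if snd p = nat m
            then of_int m * of_int (ip (sr a) (sr (fst p))) * of_nat (count M p) * bvec (M - {#p#}, g) b'
            else 0)"
  by (simp add: heis_b_def)

lemma heis_neg_bvec: "m < 0 \<Longrightarrow> heis a m (bvec (M, g)) = bvec (add_mset (a, nat (- m)) M, g)"
  by (simp add: heis_bvec heis_b_def)

lemma heis_0_bvec: "heis a 0 (bvec (M, g)) = (\<lambda>b'. complex_of_real (sqrt 2) * of_int (ip (sr a) g) * bvec (M, g) b')"
  by (simp add: heis_bvec heis_b_def)

lemma heis_pos_bvec_eq_0: assumes "0 < m" "\<forall>p\<in>#M. snd p \<noteq> nat m"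
  shows "heis a m (bvec (M, g)) = (\<lambda>_. 0)"
  using assms by (simp add: heis_bvec heis_b_pos)

lemma heis_1_single: "heis a 1 (bvec ({#(d,1)#}, g)) = (\<lambda>b'. of_int (ip (sr a) (sr d)) * bvec ({#}, g) b')"
  by (simp add: heis_bvec heis_b_pos)

lemma heis_1_pair: "heis a 1 (bvec ({#(c,1), (d,1)#}, g)) =
   (\<lambda>b'. of_int (ip (sr a) (sr c)) * bvec ({#(d,1)#}, g) b' + of_int (ip (sr a) (sr d)) * bvec ({#(c,1)#}, g) b')"
proof (cases "c = d")
  case True
  then show ?thesis by (rule_tac ext) (simp add: heis_bvec heis_b_pos)
next
  case False
  then have "set_mset {#(c,1), (d,1)#} = {(c,1), (d,1)}" by auto
  then show ?thesis using False by (rule_tac ext) (simp add: heis_bvec heis_b_pos)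
qed

lemma heis_zero: "heis a m (\<lambda>_. 0) = (\<lambda>_. 0)"
  by (rule ext) (simp add: heis_def extend_zero)

lemma heis_sum: "finite K \<Longrightarrow> \<forall>k\<in>K. finite (supp (f k)) \<Longrightarrow>
    heis a m (\<lambda>b. \<Sum>k\<in>K. f k b) b' = (\<Sum>k\<in>K. heis a m (f k) b')"
  unfolding heis_def by (rule extend_sum)

lemma heis_scale: "heis a m (\<lambda>b. c * f b) b' = c * heis a m f b'"
  unfolding heis_def by (rule extend_scale)

lemma heis_add: "finite (supp f) \<Longrightarrow> finite (supp g) \<Longrightarrow>
    heis a m (\<lambda>b. f b + g b) b' = heis a m f b' + heis a m g b'"
  unfolding heis_def by (rule extend_add)

lemma hmode_zero: "hmode c m (\<lambda>_. 0) = (\<lambda>_. 0)"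
  by (rule ext) (simp add: hmode_def heis_zero)

lemma hmode_zero_coeff: "hmode (\<lambda>_. 0) m v = (\<lambda>_. 0)"
  by (rule ext) (simp add: hmode_def)

lemma hmode_add: "finite (supp f) \<Longrightarrow> finite (supp g) \<Longrightarrow>
    hmode c m (\<lambda>b. f b + g b) b' = hmode c m f b' + hmode c m g b'"
  by (simp add: hmode_def heis_add distrib_left sum.distrib)

lemma hmode_scale: "hmode c m (\<lambda>b. k * f b) b' = k * hmode c m f b'"
  by (simp add: hmode_def heis_scale sum_distrib_left mult.left_commute)

lemma hmode_sum: "finite K \<Longrightarrow> \<forall>k\<in>K. finite (supp (f k)) \<Longrightarrow>
    hmode c m (\<lambda>b. \<Sum>k\<in>K. f k b) b' = (\<Sum>k\<in>K. hmode c m (f k) b')"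
  by (simp add: hmode_def heis_sum sum_distrib_left sum.swap[of _ K])

lemma sum_coord_ip_sr: "(\<Sum>a=1..8. of_int (\<beta> a) * of_int (ip (sr a) y) :: complex) = of_int (ip \<beta> y)"
proof -
  have "(\<Sum>a=1..8. \<beta> a * ip (sr a) y) = ip \<beta> y"
    unfolding sum_1_8 by (simp add: ip_expand sr_def algebra_simps)
  then have "of_int (\<Sum>a=1..8. \<beta> a * ip (sr a) y) = (of_int (ip \<beta> y) :: complex)" by simp
  then show ?thesis by simp
qed

lemmas sum_coord_ip_sr' = sum_coord_ip_sr[unfolded One_nat_def]

definition sqrt2_vec :: "lat \<Rightarrow> nat \<Rightarrow> complex" where
  "sqrt2_vec \<beta> = (\<lambda>a. complex_of_real (sqrt 2) * of_int (\<beta> a))"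

lemma sqrt2_sq: "complex_of_real (sqrt 2) * complex_of_real (sqrt 2) = 2"
  by (simp flip: of_real_mult)

lemma hmode_sqrt2_vec_1_single: "hmode (sqrt2_vec \<beta>) 1 (bvec ({#(d,1)#}, g)) =
   (\<lambda>b'. complex_of_real (sqrt 2) * of_int (ip \<beta> (sr d)) * bvec ({#}, g) b')"
proof (rule ext)
  fix b'
  have "hmode (sqrt2_vec \<beta>) 1 (bvec ({#(d,1)#}, g)) b' =
     (\<Sum>a=1..8. complex_of_real (sqrt 2) * (of_int (\<beta> a) * of_int (ip (sr a) (sr d)))) * bvec ({#}, g) b'"
    unfolding hmode_def sqrt2_vec_def heis_1_single by (simp add: sum_distrib_right mult.assoc)
  also have "\<dots> = complex_of_real (sqrt 2) * of_int (ip \<beta> (sr d)) * bvec ({#}, g) b'"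
    by (simp add: sum_distrib_left[symmetric] sum_coord_ip_sr sum_coord_ip_sr')
  finally show "hmode (sqrt2_vec \<beta>) 1 (bvec ({#(d,1)#}, g)) b' = complex_of_real (sqrt 2) * of_int (ip \<beta> (sr d)) * bvec ({#}, g) b'" .
qed

lemma hmode_sqrt2_vec_1_pair: "hmode (sqrt2_vec \<beta>) 1 (bvec ({#(c,1), (d,1)#}, g)) =
   (\<lambda>b'. complex_of_real (sqrt 2) * of_int (ip \<beta> (sr c)) * bvec ({#(d,1)#}, g) b'
       + complex_of_real (sqrt 2) * of_int (ip \<beta> (sr d)) * bvec ({#(c,1)#}, g) b')"
proof (rule ext)
  fix b'
  have "hmode (sqrt2_vec \<beta>) 1 (bvec ({#(c,1), (d,1)#}, g)) b' =
     (\<Sum>a=1..8. complex_of_real (sqrt 2) * (of_int (\<beta> a) * of_int (ip (sr a) (sr c)))) * bvec ({#(d,1)#}, g) b'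
   + (\<Sum>a=1..8. complex_of_real (sqrt 2) * (of_int (\<beta> a) * of_int (ip (sr a) (sr d)))) * bvec ({#(c,1)#}, g) b'"
    unfolding hmode_def sqrt2_vec_def heis_1_pair by (simp add: sum_distrib_right mult.assoc distrib_left sum.distrib)
  also have "\<dots> = complex_of_real (sqrt 2) * of_int (ip \<beta> (sr c)) * bvec ({#(d,1)#}, g) b'
       + complex_of_real (sqrt 2) * of_int (ip \<beta> (sr d)) * bvec ({#(c,1)#}, g) b'"
    by (simp add: sum_distrib_left[symmetric] sum_coord_ip_sr sum_coord_ip_sr')
  finally show "hmode (sqrt2_vec \<beta>) 1 (bvec ({#(c,1), (d,1)#}, g)) b' = complex_of_real (sqrt 2) * of_int (ip \<beta> (sr c)) * bvec ({#(d,1)#}, g) b'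
       + complex_of_real (sqrt 2) * of_int (ip \<beta> (sr d)) * bvec ({#(c,1)#}, g) b'" .
qed

definition homogeneous :: "vvec \<Rightarrow> int \<Rightarrow> bool" where
  "homogeneous v d \<longleftrightarrow> (\<forall>b. v b \<noteq> 0 \<longrightarrow> int (deg (fst b)) = d)"

lemma homogeneous_neg_degree: "homogeneous v d \<Longrightarrow> d < 0 \<Longrightarrow> v = (\<lambda>_. 0)"
  unfolding homogeneous_def by (rule ext) (metis of_nat_0_le_iff not_less)

lemma homogeneous_bvec: "homogeneous (bvec (M, g)) (int (deg M))"
  by (simp add: homogeneous_def bvec_def)

lemma deg_add_mset: "deg (add_mset p M) = snd p + deg M" by (simp add: deg_def)

lemma deg_remove: "p \<in># M \<Longrightarrow> deg M = deg (M - {#p#}) + snd p"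
proof -
  assume "p \<in># M"
  then have "M = add_mset p (M - {#p#})" by simp
  then have "deg M = deg (add_mset p (M - {#p#}))" by simp
  then show ?thesis by (simp add: deg_add_mset)
qed

lemma homogeneous_heis_pos: assumes m: "0 < m" and h: "homogeneous v d" shows "homogeneous (heis a m v) (d - m)"
  unfolding homogeneous_def
proof (intro allI impI)
  fix b' assume nz: "heis a m v b' \<noteq> 0"
  then have "(\<Sum>b\<in>supp v. v b * heis_b a m b b') \<noteq> 0" by (simp add: heis_def extend_def)
  then obtain b where b: "b \<in> supp v" "v b * heis_b a m b b' \<noteq> 0" by (rule sum.not_neutral_contains_not_neutral)
  obtain M g where bM: "b = (M, g)" by (cases b)
  have dM: "int (deg M) = d" using h b bM by (auto simp: homogeneous_def)
  have "heis_b a m (M, g) b' \<noteq> 0" using b bM by simp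
  then have "(\<Sum>p\<in>set_mset M. if snd p = nat m
            then of_int m * of_int (ip (sr a) (sr (fst p))) * of_nat (count M p) * bvec (M - {#p#}, g) b'
            else (0::complex)) \<noteq> 0" using m by (simp add: heis_b_pos)
  then obtain p where p: "p \<in> set_mset M" "(if snd p = nat m
            then of_int m * of_int (ip (sr a) (sr (fst p))) * of_nat (count M p) * bvec (M - {#p#}, g) b'
            else (0::complex)) \<noteq> 0" by (rule sum.not_neutral_contains_not_neutral)
  then have sp: "snd p = nat m" and bb: "b' = (M - {#p#}, g)" by (auto simp: bvec_def split: if_splits)
  have "deg M = deg (M - {#p#}) + snd p" using p(1) by (simp add: deg_remove)
  then show "int (deg (fst b')) = d - m" using bb sp dM m by simp
qed

lemma homogeneous_hmode_pos: assumes m: "0 < m" and h: "homogeneous v d" shows "homogeneous (hmode c m v) (d - m)"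
  unfolding homogeneous_def
proof (intro allI impI)
  fix b' assume "hmode c m v b' \<noteq> 0"
  then have "(\<Sum>a=1..8. c a * heis a m v b') \<noteq> 0" by (simp add: hmode_def)
  then obtain a where "c a * heis a m v b' \<noteq> 0" by (rule sum.not_neutral_contains_not_neutral)
  then have "heis a m v b' \<noteq> 0" by simp
  moreover have "homogeneous (heis a m v) (d - m)" by (rule homogeneous_heis_pos[OF m h])
  ultimately show "int (deg (fst b')) = d - m" unfolding homogeneous_def by blast
qed

lemma homogeneous_foldr_hmode: "(\<forall>r\<in>set rs. 1 \<le> r) \<Longrightarrow> homogeneous v d \<Longrightarrow>
    homogeneous (foldr (\<lambda>r f. hmode c (int r) \<circ> f) rs id v) (d - int (sum_list rs))"
proof (induction rs)
  case Nil then show ?case by simp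
next
  case (Cons r rs)
  have "homogeneous (foldr (\<lambda>r f. hmode c (int r) \<circ> f) rs id v) (d - int (sum_list rs))"
    by (rule Cons.IH) (use Cons.prems in auto)
  then have X: "homogeneous (hmode c (int r) (foldr (\<lambda>r f. hmode c (int r) \<circ> f) rs id v)) (d - int (sum_list rs) - int r)"
    using Cons.prems by (intro homogeneous_hmode_pos) auto
  have e1: "d - int (sum_list rs) - int r = d - int (sum_list (r # rs))" by simp
  have e2: "foldr (\<lambda>r f. hmode c (int r) \<circ> f) (r # rs) id v = hmode c (int r) (foldr (\<lambda>r f. hmode c (int r) \<circ> f) rs id v)"
    by simp
  show ?case unfolding e2 e1[symmetric] by (rule X)
qed

section \<open>The exponential operators \<open>E\<^sup>\<plusminus>\<close>\<close>

lemma foldr_hmode_zero: "foldr (\<lambda>r f. hmode c (h r) \<circ> f) rs id (\<lambda>_. 0) = (\<lambda>_. 0)"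
  by (induction rs) (auto simp: hmode_zero)

lemma foldr_hmode_zero_coeff: "rs \<noteq> [] \<Longrightarrow> foldr (\<lambda>r f. hmode (\<lambda>_. 0) (h r) \<circ> f) rs id v = (\<lambda>_. 0)"
  by (cases rs) (auto simp: hmode_zero_coeff)

lemma Eminus_zero: "Eminus c p (\<lambda>_. 0) = (\<lambda>_. 0)"
proof -
  have "\<And>rs. foldr (\<lambda>r f. hmode c (- int r) \<circ> f) rs id (\<lambda>_. 0) = (\<lambda>_. 0)"
    using foldr_hmode_zero[where h = "\<lambda>r. - int r"] by simp
  then show ?thesis by (simp add: Eminus_def)
qed

lemma Eminus_zero_coeff: assumes "0 < p" shows "Eminus (\<lambda>_. 0) p v = (\<lambda>_. 0)"
proof -
  have "foldr (\<lambda>r f. hmode (\<lambda>_. 0) (- int r) \<circ> f) rs id v = (\<lambda>_. 0)" if "sum_list rs = p" for rs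
    using foldr_hmode_zero_coeff[of rs "\<lambda>r. - int r"] that assms by fastforce
  then show ?thesis by (simp add: Eminus_def)
qed

lemma Eplus_zero_coeff: assumes "0 < q" shows "Eplus (\<lambda>_. 0) q v = (\<lambda>_. 0)"
proof -
  have "foldr (\<lambda>r f. hmode (\<lambda>_. 0) (int r) \<circ> f) rs id v = (\<lambda>_. 0)" if "sum_list rs = q" for rs
    using foldr_hmode_zero_coeff[of rs "\<lambda>r. int r"] that assms by fastforce
  then show ?thesis by (simp add: Eplus_def)
qed

lemma Eplus_eq_0_if_degree_less: assumes "homogeneous v d" "d < int q" shows "Eplus c q v = (\<lambda>_. 0)"
proof -
  have "\<And>rs. set rs \<subseteq> {1..q} \<Longrightarrow> sum_list rs = q \<Longrightarrow> foldr (\<lambda>r f. hmode c (int r) \<circ> f) rs id v = (\<lambda>_. 0)"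
  proof -
    fix rs assume rs: "set rs \<subseteq> {1..q}" "sum_list rs = q"
    have "\<forall>r\<in>set rs. 1 \<le> r" using rs(1) by auto
    then have "homogeneous (foldr (\<lambda>r f. hmode c (int r) \<circ> f) rs id v) (d - int q)"
      using homogeneous_foldr_hmode[OF _ assms(1), of rs c] rs(2) by simp
    then show "foldr (\<lambda>r f. hmode c (int r) \<circ> f) rs id v = (\<lambda>_. 0)"
      using assms(2) by (intro homogeneous_neg_degree) auto
  qed
  then show ?thesis by (simp add: Eplus_def)
qed

lemma compositions_0: "{rs. set rs \<subseteq> {1..0::nat} \<and> sum_list rs = 0} = {[]}"
  by auto

lemma compositions_2: "{rs. set rs \<subseteq> {1..2::nat} \<and> sum_list rs = 2} = {[2], [1,1]}"
proof
  show "{[2], [1, 1]} \<subseteq> {rs. set rs \<subseteq> {1..2::nat} \<and> sum_list rs = 2}" by auto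
  show "{rs. set rs \<subseteq> {1..2::nat} \<and> sum_list rs = 2} \<subseteq> {[2], [1, 1]}"
  proof
    fix rs :: "nat list" assume "rs \<in> {rs. set rs \<subseteq> {1..2} \<and> sum_list rs = 2}"
    then have h: "\<forall>x\<in>set rs. 1 \<le> x \<and> x \<le> 2" "sum_list rs = 2" by auto
    show "rs \<in> {[2], [1, 1]}"
    proof (cases rs)
      case Nil then show ?thesis using h by simp
    next
      case (Cons a t)
      show ?thesis
      proof (cases t)
        case Nil then show ?thesis using h Cons by auto
      next
        case (Cons b u)
        have ab: "1 \<le> a" "1 \<le> b" "a + (b + sum_list u) = 2"
          using h \<open>rs = a # t\<close> Cons by auto
        then have a1: "a = 1" "b = 1" "sum_list u = 0" by linarith+
        have u: "u = []"
        proof (cases u)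
          case Nil then show ?thesis .
        next
          case (Cons c w)
          then have "1 \<le> c" using h \<open>rs = a # t\<close> \<open>t = b # u\<close> by auto
          then show ?thesis using a1(3) Cons by simp
        qed
        show ?thesis using \<open>rs = a # t\<close> \<open>t = b # u\<close> a1 u by simp
      qed
    qed
  qed
qed

lemma Eminus_0: "Eminus c 0 v = v"
  unfolding Eminus_def compositions_0 by simp

lemma Eplus_0: "Eplus c 0 v = v"
  unfolding Eplus_def compositions_0 by simp

lemma Eminus_2: "Eminus c 2 v = (\<lambda>b. (1/2) * hmode c (-2) v b + (1/2) * hmode c (-1) (hmode c (-1) v) b)"
  unfolding Eminus_def compositions_2 by (rule ext) simp

lemma Eplus_2: "Eplus c 2 v = (\<lambda>b. (-1/2) * hmode c 2 v b + (1/2) * hmode c 1 (hmode c 1 v) b)"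
  unfolding Eplus_def compositions_2 by (rule ext) simp

lemma Eplus_sqrt2_vec_2_pair: "Eplus (sqrt2_vec \<beta>) 2 (bvec ({#(c,1), (d,1)#}, g)) =
   (\<lambda>b'. 2 * of_int (ip \<beta> (sr c) * ip \<beta> (sr d)) * bvec ({#}, g) b')"
proof (rule ext)
  fix b'
  let ?r = "complex_of_real (sqrt 2)"
  let ?X = "of_int (ip \<beta> (sr c)) :: complex"
  let ?Y = "of_int (ip \<beta> (sr d)) :: complex"
  let ?e = "bvec ({#}, g) b'"
  have z: "hmode (sqrt2_vec \<beta>) 2 (bvec ({#(c,1), (d,1)#}, g)) b' = 0"
  proof -
    have "\<And>a. heis a 2 (bvec ({#(c,1), (d,1)#}, g)) = (\<lambda>_. 0)" by (rule heis_pos_bvec_eq_0) auto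
    then show ?thesis by (simp add: hmode_def)
  qed
  have "hmode (sqrt2_vec \<beta>) 1 (hmode (sqrt2_vec \<beta>) 1 (bvec ({#(c,1), (d,1)#}, g))) b' =
     ?r * ?X * hmode (sqrt2_vec \<beta>) 1 (bvec ({#(d,1)#}, g)) b' + ?r * ?Y * hmode (sqrt2_vec \<beta>) 1 (bvec ({#(c,1)#}, g)) b'"
    unfolding hmode_sqrt2_vec_1_pair
    by (subst hmode_add) (auto intro!: finite_supp_scale finite_supp_bvec simp: hmode_scale)
  also have "\<dots> = ?r * ?X * (?r * ?Y * ?e) + ?r * ?Y * (?r * ?X * ?e)"
    unfolding hmode_sqrt2_vec_1_single by simp
  also have "\<dots> = (?r * ?r) * 2 * (?X * ?Y) * ?e" by (simp add: algebra_simps)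
  also have "\<dots> = 4 * (?X * ?Y) * ?e" by (simp add: sqrt2_sq)
  finally have h: "hmode (sqrt2_vec \<beta>) 1 (hmode (sqrt2_vec \<beta>) 1 (bvec ({#(c,1), (d,1)#}, g))) b' = 4 * (?X * ?Y) * ?e" .
  show "Eplus (sqrt2_vec \<beta>) 2 (bvec ({#(c,1), (d,1)#}, g)) b' = 2 * of_int (ip \<beta> (sr c) * ip \<beta> (sr d)) * bvec ({#}, g) b'"
    unfolding Eplus_2 z h by simp
qed

section \<open>Components of lattice vertex operators\<close>

text \<open>Index set and summand of the sum defining \<^const>\<open>Ybas\<close>: in a triple \<open>(ms, p, q)\<close>, \<open>ms\<close> lists the
  modes of the Heisenberg factors, and \<open>p\<close>, \<open>q\<close> are the degrees taken from \<open>E\<^sup>-\<close> and \<open>E\<^sup>+\<close>.\<close>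

definition Ybox :: "(nat \<times> nat) list \<Rightarrow> int \<Rightarrow> int \<Rightarrow> nat \<Rightarrow> (int list \<times> nat \<times> nat) set" where
  "Ybox xs N c B = {(ms, p, q). length ms = length xs \<and> set ms \<subseteq> {- int B..int B} \<and> p \<le> B \<and> q \<le> B
                \<and> (\<Sum>j<length xs. - (ms ! j) - int (snd (xs ! j))) + int p - int q + c = - N - 1}"

definition Yterm :: "(nat \<times> nat) list \<Rightarrow> lat \<Rightarrow> (nat \<times> nat) multiset \<times> lat \<Rightarrow> int list \<times> nat \<times> nat \<Rightarrow> vvec" where
  "Yterm xs \<beta> bw t = (case t of (ms, p, q) \<Rightarrow> \<lambda>b.
          (\<Prod>j<length xs. (of_int (- (ms ! j) - 1) :: complex) gchoose (snd (xs ! j) - 1))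
          * (hprod xs ms (filter (\<lambda>j. ms ! j < 0) [0..<length xs])
               (Eminus (sqrt2_vec \<beta>) p (Eplus (sqrt2_vec \<beta>) q (shift \<beta>
                 (hprod xs ms (filter (\<lambda>j. ms ! j \<ge> 0) [0..<length xs]) (bvec bw))))) b))"

lemma Ybas_eq_sum_Yterm: "Ybas (Mv, \<beta>) N (Mw, \<gamma>) b =
   (\<Sum>t\<in>Ybox (sorted_list_of_multiset Mv) N (2 * ip \<beta> \<gamma>)
        (nat (\<bar>N\<bar> + 1 + \<bar>2 * ip \<beta> \<gamma>\<bar> + 2 * int (deg Mw) + int (deg Mv))).
      Yterm (sorted_list_of_multiset Mv) \<beta> (Mw, \<gamma>) t b)"
  unfolding Ybas_def Let_def Ybox_def Yterm_def sqrt2_vec_def prod.case by (rule sum.cong[OF refl]) (auto split: prod.splits)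

lemma finite_Ybox: "finite (Ybox xs N c B)"
proof -
  have "Ybox xs N c B \<subseteq> {ms. set ms \<subseteq> {- int B..int B} \<and> length ms = length xs} \<times> {..B} \<times> {..B}"
    by (auto simp: Ybox_def)
  moreover have "finite ({ms. set ms \<subseteq> {- int B..int B} \<and> length ms = length xs} \<times> {..B} \<times> {..B})"
    by (intro finite_cartesian_product finite_lists_length_eq) auto
  ultimately show ?thesis by (rule finite_subset)
qed

lemma sum_eq_single: assumes "finite S" "\<forall>t\<in>S. t \<noteq> t0 \<longrightarrow> F t = 0"
  shows "sum F S = (if t0 \<in> S then F t0 else 0)"
proof (cases "t0 \<in> S")
  case True
  have "sum F S = F t0 + sum F (S - {t0})" using assms(1) True by (simp add: sum.remove)
  also have "sum F (S - {t0}) = 0" using assms(2) by (intro sum.neutral) auto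
  finally show ?thesis using True by simp
next
  case False
  have "sum F S = 0" using assms(2) False by (intro sum.neutral) auto
  then show ?thesis using False by simp
qed

lemma shift_bvec: "shift \<beta> (bvec (M, g)) = bvec (M, (\<lambda>k. g k + \<beta> k))"
proof (rule ext)
  fix b :: bas
  obtain M' g' where b: "b = (M', g')" by (cases b)
  have "((\<lambda>k. g' k - \<beta> k) = g) = (g' = (\<lambda>k. g k + \<beta> k))" by (simp add: fun_eq_iff diff_eq_eq)
  then show "shift \<beta> (bvec (M, g)) b = bvec (M, \<lambda>k. g k + \<beta> k) b" by (simp add: shift_def bvec_def b)
qed

lemma hprod_zero: "hprod xs ms js (\<lambda>_. 0) = (\<lambda>_. 0)"
  unfolding hprod_def by (induction js) (auto simp: heis_zero)

lemma deg_empty: "deg {#} = 0" by (simp add: deg_def)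

lemma Ybas_ee_ee: "Ybas ({#}, \<beta>) N ({#}, \<gamma>) = (if 0 \<le> - N - 1 - 2 * ip \<beta> \<gamma>
    then Eminus (sqrt2_vec \<beta>) (nat (- N - 1 - 2 * ip \<beta> \<gamma>)) (bvec ({#}, \<lambda>k. \<gamma> k + \<beta> k)) else (\<lambda>_. 0))"
proof (rule ext)
  fix b
  let ?c = "2 * ip \<beta> \<gamma>"
  let ?B = "nat (\<bar>N\<bar> + 1 + \<bar>?c\<bar> + 2 * int (deg ({#}::(nat\<times>nat) multiset)) + int (deg ({#}::(nat\<times>nat) multiset)))"
  let ?p0 = "nat (- N - 1 - ?c)"
  let ?t0 = "([]::int list, ?p0, 0::nat)"
  let ?g = "\<lambda>k. \<gamma> k + \<beta> k"
  have YT0: "\<And>ms p q. Yterm [] \<beta> ({#}, \<gamma>) (ms, p, q) b = Eminus (sqrt2_vec \<beta>) p (Eplus (sqrt2_vec \<beta>) q (bvec ({#}, ?g))) b"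
    by (simp add: Yterm_def hprod_def shift_bvec)
  have zero: "\<forall>t\<in>Ybox [] N ?c ?B. t \<noteq> ?t0 \<longrightarrow> Yterm [] \<beta> ({#}, \<gamma>) t b = 0"
  proof (intro ballI impI)
    fix t assume t: "t \<in> Ybox [] N ?c ?B" "t \<noteq> ?t0"
    obtain ms p q where tt: "t = (ms, p, q)" by (cases t)
    have ms: "ms = []" and eq: "int p - int q + ?c = - N - 1" using t(1) tt by (auto simp: Ybox_def)
    have "q \<noteq> 0"
    proof
      assume "q = 0"
      then have "p = ?p0" using eq by simp
      then show False using t(2) tt ms \<open>q = 0\<close> by simp
    qed
    then have "Eplus (sqrt2_vec \<beta>) q (bvec ({#}, ?g)) = (\<lambda>_. 0)"
      by (intro Eplus_eq_0_if_degree_less[OF homogeneous_bvec]) (simp add: deg_empty)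
    then show "Yterm [] \<beta> ({#}, \<gamma>) t b = 0" using tt YT0 by (simp add: Eminus_zero)
  qed
  have mem: "?t0 \<in> Ybox [] N ?c ?B \<longleftrightarrow> 0 \<le> - N - 1 - ?c"
    by (auto simp: Ybox_def deg_empty)
  show "Ybas ({#}, \<beta>) N ({#}, \<gamma>) b = (if 0 \<le> - N - 1 - 2 * ip \<beta> \<gamma>
    then Eminus (sqrt2_vec \<beta>) (nat (- N - 1 - 2 * ip \<beta> \<gamma>)) (bvec ({#}, \<lambda>k. \<gamma> k + \<beta> k)) else (\<lambda>_. 0)) b"
    unfolding Ybas_eq_sum_Yterm sorted_list_of_multiset_empty
    using sum_eq_single[OF finite_Ybox zero] mem by (simp add: YT0 Eplus_0)
qed

lemma vac_lat_add: "(\<lambda>k. vac_lat k + \<beta> k) = \<beta>" by (simp add: vac_lat_def)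

lemma sqrt2_vec_vac: "sqrt2_vec vac_lat = (\<lambda>_. 0)" by (simp add: sqrt2_vec_def vac_lat_def)

lemma shift_vac_lat: "shift vac_lat v = v" by (simp add: shift_def vac_lat_def)

lemma ip_vac_lat: "ip \<beta> vac_lat = 0" "ip vac_lat \<beta> = 0" by (simp_all add: ip_expand vac_lat_def)

lemma deg_pair: "deg {#(c,1), (d,1)#} = 2" by (simp add: deg_def)

lemma deg_pair': "deg {#(c, Suc 0), (d, Suc 0)#} = 2" by (simp add: deg_def)

lemma Ybas_ee_pair: "Ybas ({#}, \<beta>) 1 ({#(c,1), (d,1)#}, vac_lat) =
   (\<lambda>b'. 2 * of_int (ip \<beta> (sr c) * ip \<beta> (sr d)) * bvec ({#}, \<beta>) b')"
proof (rule ext)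
  fix b
  let ?M = "{#(c,1), (d,1)#}"
  let ?B = "nat (\<bar>1\<bar> + 1 + \<bar>2 * ip \<beta> vac_lat\<bar> + 2 * int (deg ?M) + int (deg ({#}::(nat\<times>nat) multiset)))"
  let ?t0 = "([]::int list, 0::nat, 2::nat)"
  have YT0: "\<And>ms p q. Yterm [] \<beta> (?M, vac_lat) (ms, p, q) b = Eminus (sqrt2_vec \<beta>) p (Eplus (sqrt2_vec \<beta>) q (bvec (?M, \<beta>))) b"
    by (simp add: Yterm_def hprod_def shift_bvec vac_lat_add)
  have zero: "\<forall>t\<in>Ybox [] 1 (2 * ip \<beta> vac_lat) ?B. t \<noteq> ?t0 \<longrightarrow> Yterm [] \<beta> (?M, vac_lat) t b = 0"
  proof (intro ballI impI)
    fix t assume t: "t \<in> Ybox [] 1 (2 * ip \<beta> vac_lat) ?B" "t \<noteq> ?t0"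
    obtain ms p q where tt: "t = (ms, p, q)" by (cases t)
    have ms: "ms = []" and eq: "int p - int q = - 2" using t(1) tt by (auto simp: Ybox_def ip_vac_lat)
    have "2 < q"
    proof (rule ccontr)
      assume "\<not> 2 < q"
      then have "p = 0" "q = 2" using eq by auto
      then show False using t(2) tt ms by simp
    qed
    then have "Eplus (sqrt2_vec \<beta>) q (bvec (?M, \<beta>)) = (\<lambda>_. 0)"
      by (intro Eplus_eq_0_if_degree_less[OF homogeneous_bvec]) (simp add: deg_pair deg_pair')
    then show "Yterm [] \<beta> (?M, vac_lat) t b = 0" using tt YT0 by (simp add: Eminus_zero)
  qed
  have mem: "?t0 \<in> Ybox [] 1 (2 * ip \<beta> vac_lat) ?B"
    by (simp add: Ybox_def deg_empty deg_pair ip_vac_lat)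
  show "Ybas ({#}, \<beta>) 1 (?M, vac_lat) b = 2 * of_int (ip \<beta> (sr c) * ip \<beta> (sr d)) * bvec ({#}, \<beta>) b"
  proof -
    have v: "Yterm [] \<beta> (?M, vac_lat) ?t0 b = 2 * of_int (ip \<beta> (sr c) * ip \<beta> (sr d)) * bvec ({#}, \<beta>) b"
      unfolding YT0 Eminus_0 Eplus_sqrt2_vec_2_pair by simp
    show ?thesis
      unfolding Ybas_eq_sum_Yterm sorted_list_of_multiset_empty sum_eq_single[OF finite_Ybox zero] if_P[OF mem] v ..
  qed
qed

lemma length_2_cases: "length ms = 2 \<Longrightarrow> \<exists>m1 m2. ms = [m1, m2]"
  by (auto simp: length_Suc_conv numeral_2_eq_2)

lemma sum_lessThan_2: "(\<Sum>j<(2::nat). f j) = f 0 + f 1" by (simp add: numeral_2_eq_2)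

lemma prod_lessThan_2: "(\<Prod>j<(2::nat). f j) = f 0 * f 1" by (simp add: numeral_2_eq_2)

lemma upt_0_2: "[0..<2] = [0::nat, 1]" by (simp add: numeral_2_eq_2)

lemma Yterm_pair_vac: "Yterm [(a,1),(b,1)] vac_lat bw ([m1,m2],p,q) = (if p = 0 \<and> q = 0 then
    (if 0 \<le> m1 \<and> m2 < 0 then heis b m2 (heis a m1 (bvec bw)) else heis a m1 (heis b m2 (bvec bw)))
    else (\<lambda>_. 0))"
proof (rule ext)
  fix b'
  have pr: "(\<Prod>j<length [(a,1),(b,1::nat)]. (of_int (- ([m1,m2] ! j) - 1) :: complex) gchoose (snd ([(a,1),(b,1::nat)] ! j) - 1)) = 1"
    by (simp add: prod_lessThan_2)
  have YTe: "Yterm [(a,1),(b,1)] vac_lat bw ([m1,m2],p,q) b' =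
     hprod [(a,1),(b,1)] [m1,m2] (filter (\<lambda>j. [m1,m2] ! j < 0) [0,1])
               (Eminus (\<lambda>_. 0) p (Eplus (\<lambda>_. 0) q
                 (hprod [(a,1),(b,1)] [m1,m2] (filter (\<lambda>j. [m1,m2] ! j \<ge> 0) [0,1]) (bvec bw)))) b'"
    unfolding Yterm_def prod.case pr sqrt2_vec_vac shift_vac_lat by (simp add: upt_0_2)
  show "Yterm [(a,1),(b,1)] vac_lat bw ([m1,m2],p,q) b' = (if p = 0 \<and> q = 0 then
    (if 0 \<le> m1 \<and> m2 < 0 then heis b m2 (heis a m1 (bvec bw)) else heis a m1 (heis b m2 (bvec bw)))
    else (\<lambda>_. 0)) b'"
  proof (cases "p = 0")
    case False
    then show ?thesis unfolding YTe by (simp add: Eminus_zero_coeff hprod_zero)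
  next
    case True
    show ?thesis
    proof (cases "q = 0")
      case False
      then show ?thesis unfolding YTe by (simp add: Eplus_zero_coeff Eminus_zero hprod_zero)
    next
      case True
      then show ?thesis unfolding YTe using \<open>p = 0\<close> by (simp add: Eplus_0 Eminus_0 hprod_def)
    qed
  qed
qed

lemma Yterm_pair_vac_nonzero:
  assumes t: "t \<in> Ybox [(a,1),(b,1)] 1 0 B" and nz: "Yterm [(a,1),(b,1)] vac_lat bw t b' \<noteq> 0"
  obtains m where "t = ([m, -m], 0, 0)"
proof -
  obtain ms p q where tt: "t = (ms, p, q)" by (cases t)
  have "length ms = 2" using t by (simp add: tt Ybox_def)
  then obtain m1 m2 where ms: "ms = [m1, m2]" using length_2_cases by blast
  have "p = 0" "q = 0"
    using nz unfolding tt ms Yterm_pair_vac by (auto split: if_splits)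
  moreover have "- m1 - 1 + (- m2 - 1) + int p - int q = - 2"
    using t by (simp add: tt ms Ybox_def sum_lessThan_2)
  ultimately have "t = ([m1, -m1], 0, 0)" using tt ms by simp
  then show ?thesis by (rule that)
qed

lemma sum_Yterm_pair_ee: "(\<Sum>t\<in>Ybox [(a,1),(b,1)] 1 0 B. Yterm [(a,1),(b,1)] vac_lat ({#}, \<gamma>) t b') =
    2 * of_int (ip (sr a) \<gamma> * ip (sr b) \<gamma>) * bvec ({#}, \<gamma>) b'"
proof -
  let ?xs = "[(a,1),(b,1::nat)]"
  let ?t0 = "([0,0]::int list, 0::nat, 0::nat)"
  have zero: "\<forall>t\<in>Ybox ?xs 1 0 B. t \<noteq> ?t0 \<longrightarrow> Yterm ?xs vac_lat ({#}, \<gamma>) t b' = 0"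
  proof (intro ballI impI; rule ccontr)
    fix t assume t: "t \<in> Ybox ?xs 1 0 B" "t \<noteq> ?t0" and nz: "Yterm ?xs vac_lat ({#}, \<gamma>) t b' \<noteq> 0"
    obtain m where tm: "t = ([m, -m], 0, 0)" using Yterm_pair_vac_nonzero[OF t(1) nz] by blast
    with t(2) have "0 < m \<or> m < 0" by auto
    then show False
      using nz unfolding tm Yterm_pair_vac by (auto simp: heis_pos_bvec_eq_0 heis_zero)
  qed
  have mem: "?t0 \<in> Ybox ?xs 1 0 B" by (simp add: Ybox_def sum_lessThan_2)
  have "Yterm ?xs vac_lat ({#}, \<gamma>) ?t0 b' = heis a 0 (heis b 0 (bvec ({#}, \<gamma>))) b'"
    unfolding Yterm_pair_vac by simp
  also have "\<dots> = complex_of_real (sqrt 2) * of_int (ip (sr a) \<gamma>)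
      * (complex_of_real (sqrt 2) * of_int (ip (sr b) \<gamma>) * bvec ({#}, \<gamma>) b')"
    unfolding heis_0_bvec[of b] by (simp add: heis_scale heis_0_bvec)
  also have "\<dots> = (complex_of_real (sqrt 2) * complex_of_real (sqrt 2))
      * (of_int (ip (sr a) \<gamma>) * of_int (ip (sr b) \<gamma>)) * bvec ({#}, \<gamma>) b'"
    by (simp only: ac_simps)
  finally show ?thesis
    unfolding sum_eq_single[OF finite_Ybox zero] if_P[OF mem] sqrt2_sq by simp
qed

lemma heis_m1_single: "heis b (-1) (bvec ({#(d,1)#}, g)) = bvec ({#(b,1), (d,1)#}, g)"
  by (simp add: heis_neg_bvec)

lemmas heis_m1_single' = heis_m1_single[unfolded One_nat_def]

lemma heis_m1_heis_1_pair: "heis b (-1) (heis a 1 (bvec ({#(c,1), (d,1)#}, g))) b' =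
   of_int (ip (sr a) (sr c)) * bvec ({#(b,1), (d,1)#}, g) b' + of_int (ip (sr a) (sr d)) * bvec ({#(b,1), (c,1)#}, g) b'"
  unfolding heis_1_pair
  by (subst heis_add) (auto intro!: finite_supp_scale finite_supp_bvec simp: heis_scale heis_m1_single heis_m1_single')

lemma sum_Yterm_pair_pair:
  assumes "1 \<le> B"
  shows "(\<Sum>t\<in>Ybox [(a,1),(b,1)] 1 0 B. Yterm [(a,1),(b,1)] vac_lat ({#(c,1), (d,1)#}, vac_lat) t b') =
    of_int (ip (sr a) (sr c)) * bvec ({#(b,1), (d,1)#}, vac_lat) b' + of_int (ip (sr a) (sr d)) * bvec ({#(b,1), (c,1)#}, vac_lat) b'
  + of_int (ip (sr b) (sr c)) * bvec ({#(a,1), (d,1)#}, vac_lat) b' + of_int (ip (sr b) (sr d)) * bvec ({#(a,1), (c,1)#}, vac_lat) b'"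
proof -
  let ?xs = "[(a,1),(b,1::nat)]"
  let ?M = "{#(c,1), (d,1::nat)#}"
  let ?t1 = "([1,-1]::int list, 0::nat, 0::nat)"
  let ?t2 = "([-1,1]::int list, 0::nat, 0::nat)"
  let ?F = "\<lambda>t. Yterm ?xs vac_lat (?M, vac_lat) t b'"
  have zero: "\<forall>t\<in>Ybox ?xs 1 0 B - {?t1, ?t2}. ?F t = 0"
  proof (intro ballI; rule ccontr)
    fix t assume t: "t \<in> Ybox ?xs 1 0 B - {?t1, ?t2}" and nz: "?F t \<noteq> 0"
    obtain m where tm: "t = ([m, -m], 0, 0)" using Yterm_pair_vac_nonzero[of t] t nz by blast
    with t have "m = 0 \<or> 1 < m \<or> m < -1" by auto
    then show False
      using nz unfolding tm Yterm_pair_vac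
      by (auto simp: heis_pos_bvec_eq_0 heis_0_bvec ip_vac_lat heis_zero)
  qed
  have sub: "{?t1, ?t2} \<subseteq> Ybox ?xs 1 0 B" using assms by (simp add: Ybox_def sum_lessThan_2)
  have "(\<Sum>t\<in>Ybox ?xs 1 0 B. ?F t) = ?F ?t1 + ?F ?t2"
    using sum.mono_neutral_right[OF finite_Ybox sub zero] by simp
  also have "?F ?t1 = heis b (-1) (heis a 1 (bvec (?M, vac_lat))) b'" unfolding Yterm_pair_vac by simp
  also have "?F ?t2 = heis a (-1) (heis b 1 (bvec (?M, vac_lat))) b'" unfolding Yterm_pair_vac by simp
  finally show ?thesis unfolding heis_m1_heis_1_pair by (simp add: algebra_simps)
qed

lemma sorted_list_pair_le: "(a,1) \<le> (b,1::nat) \<Longrightarrow> sorted_list_of_multiset {#(a,1), (b,1::nat)#} = [(a,1), (b,1)]"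
  by simp

lemma sorted_list_pair_gt: "\<not> (a,1) \<le> (b,1::nat) \<Longrightarrow> sorted_list_of_multiset {#(a,1), (b,1::nat)#} = [(b,1), (a,1)]"
  by simp

lemma Ybas_pair_ee: "Ybas ({#(a,1), (b,1)#}, vac_lat) 1 ({#}, \<gamma>) =
   (\<lambda>b'. 2 * of_int (ip (sr a) \<gamma> * ip (sr b) \<gamma>) * bvec ({#}, \<gamma>) b')"
proof (rule ext)
  fix b'
  show "Ybas ({#(a,1), (b,1)#}, vac_lat) 1 ({#}, \<gamma>) b' = 2 * of_int (ip (sr a) \<gamma> * ip (sr b) \<gamma>) * bvec ({#}, \<gamma>) b'"
  proof (cases "(a,1) \<le> (b,1::nat)")
    case True
    show ?thesis unfolding Ybas_eq_sum_Yterm sorted_list_pair_le[OF True] by (simp add: ip_vac_lat sum_Yterm_pair_ee[unfolded One_nat_def])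
  next
    case False
    show ?thesis unfolding Ybas_eq_sum_Yterm sorted_list_pair_gt[OF False] by (simp add: ip_vac_lat sum_Yterm_pair_ee[unfolded One_nat_def])
  qed
qed

lemma Ybas_pair_pair: "Ybas ({#(a,1), (b,1)#}, vac_lat) 1 ({#(c,1), (d,1)#}, vac_lat) =
   (\<lambda>b'. of_int (ip (sr a) (sr c)) * bvec ({#(b,1), (d,1)#}, vac_lat) b' + of_int (ip (sr a) (sr d)) * bvec ({#(b,1), (c,1)#}, vac_lat) b'
  + of_int (ip (sr b) (sr c)) * bvec ({#(a,1), (d,1)#}, vac_lat) b' + of_int (ip (sr b) (sr d)) * bvec ({#(a,1), (c,1)#}, vac_lat) b')"
proof (rule ext)
  fix b'
  show "Ybas ({#(a,1), (b,1)#}, vac_lat) 1 ({#(c,1), (d,1)#}, vac_lat) b' =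
    of_int (ip (sr a) (sr c)) * bvec ({#(b,1), (d,1)#}, vac_lat) b' + of_int (ip (sr a) (sr d)) * bvec ({#(b,1), (c,1)#}, vac_lat) b'
  + of_int (ip (sr b) (sr c)) * bvec ({#(a,1), (d,1)#}, vac_lat) b' + of_int (ip (sr b) (sr d)) * bvec ({#(a,1), (c,1)#}, vac_lat) b'"
  proof (cases "(a,1) \<le> (b,1::nat)")
    case True
    show ?thesis unfolding Ybas_eq_sum_Yterm sorted_list_pair_le[OF True] using sum_Yterm_pair_pair[unfolded One_nat_def] by (simp add: ip_vac_lat)
  next
    case False
    show ?thesis unfolding Ybas_eq_sum_Yterm sorted_list_pair_gt[OF False] using sum_Yterm_pair_pair[unfolded One_nat_def] by (simp add: ip_vac_lat algebra_simps)
  qed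
qed

lemma Ymode_eq_sum_superset: assumes "finite A" "supp v \<subseteq> A" "finite B" "supp w \<subseteq> B"
  shows "Ymode v N w b = (\<Sum>bv\<in>A. \<Sum>bw\<in>B. v bv * w bw * Ybas bv N bw b)"
proof -
  have fv: "finite (supp v)" and fw: "finite (supp w)" using assms finite_subset by auto
  have "Ymode v N w b = (\<Sum>bv\<in>supp v. \<Sum>bw\<in>B. v bv * w bw * Ybas bv N bw b)"
    unfolding Ymode_def
  proof (rule sum.cong[OF refl])
    fix bv show "(\<Sum>bw\<in>supp w. v bv * w bw * Ybas bv N bw b) = (\<Sum>bw\<in>B. v bv * w bw * Ybas bv N bw b)"
      by (rule sum.mono_neutral_left) (use assms in \<open>auto simp: supp_def\<close>)
  qed
  also have "\<dots> = (\<Sum>bv\<in>A. \<Sum>bw\<in>B. v bv * w bw * Ybas bv N bw b)"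
    by (rule sum.mono_neutral_left) (use assms in \<open>auto simp: supp_def\<close>)
  finally show ?thesis .
qed

lemma Ymode_add_right: assumes "finite (supp v)" "finite (supp f)" "finite (supp g)"
  shows "Ymode v N (\<lambda>bb. f bb + g bb) b = Ymode v N f b + Ymode v N g b"
proof -
  let ?B = "supp f \<union> supp g"
  have s: "supp (\<lambda>bb. f bb + g bb) \<subseteq> ?B" "supp f \<subseteq> ?B" "supp g \<subseteq> ?B" by (auto simp: supp_def)
  have fB: "finite ?B" using assms by simp
  show ?thesis
    unfolding Ymode_eq_sum_superset[OF assms(1) order_refl fB s(1)] Ymode_eq_sum_superset[OF assms(1) order_refl fB s(2)]
      Ymode_eq_sum_superset[OF assms(1) order_refl fB s(3)]
    by (simp add: algebra_simps sum.distrib)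
qed

lemma Ymode_scale_right: assumes "finite (supp v)" "finite (supp f)"
  shows "Ymode v N (\<lambda>bb. c * f bb) b = c * Ymode v N f b"
proof -
  have s: "supp (\<lambda>bb. c * f bb) \<subseteq> supp f" by (auto simp: supp_def)
  show ?thesis
    unfolding Ymode_eq_sum_superset[OF assms(1) order_refl assms(2) s] Ymode_eq_sum_superset[OF assms(1) order_refl assms(2) order_refl]
    by (simp add: sum_distrib_left algebra_simps)
qed

lemma Ymode_sum_right: assumes "finite (supp v)" "finite K" "\<forall>k\<in>K. finite (supp (f k))"
  shows "Ymode v N (\<lambda>bb. \<Sum>k\<in>K. f k bb) b = (\<Sum>k\<in>K. Ymode v N (f k) b)"
proof -
  let ?B = "\<Union>k\<in>K. supp (f k)"
  have fB: "finite ?B" using assms by auto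
  have s: "supp (\<lambda>bb. \<Sum>k\<in>K. f k bb) \<subseteq> ?B"
  proof
    fix b assume "b \<in> supp (\<lambda>bb. \<Sum>k\<in>K. f k bb)"
    then have "(\<Sum>k\<in>K. f k b) \<noteq> 0" by (simp add: supp_def)
    then obtain k where "k \<in> K" "f k b \<noteq> 0" by (rule sum.not_neutral_contains_not_neutral)
    then show "b \<in> ?B" by (auto simp: supp_def)
  qed
  have sk: "\<And>k. k \<in> K \<Longrightarrow> supp (f k) \<subseteq> ?B" by auto
  have "Ymode v N (\<lambda>bb. \<Sum>k\<in>K. f k bb) b = (\<Sum>bv\<in>supp v. \<Sum>bw\<in>?B. v bv * (\<Sum>k\<in>K. f k bw) * Ybas bv N bw b)"
    by (rule Ymode_eq_sum_superset[OF assms(1) order_refl fB s])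
  also have "\<dots> = (\<Sum>k\<in>K. \<Sum>bv\<in>supp v. \<Sum>bw\<in>?B. v bv * f k bw * Ybas bv N bw b)"
    by (simp add: sum_distrib_left sum_distrib_right sum.swap[of _ K] algebra_simps)
  also have "\<dots> = (\<Sum>k\<in>K. Ymode v N (f k) b)"
    by (rule sum.cong[OF refl]) (simp add: Ymode_eq_sum_superset[OF assms(1) order_refl fB sk])
  finally show ?thesis .
qed

lemma Ymode_add_left: assumes "finite (supp w)" "finite (supp f)" "finite (supp g)"
  shows "Ymode (\<lambda>bb. f bb + g bb) N w b = Ymode f N w b + Ymode g N w b"
proof -
  let ?A = "supp f \<union> supp g"
  have s: "supp (\<lambda>bb. f bb + g bb) \<subseteq> ?A" "supp f \<subseteq> ?A" "supp g \<subseteq> ?A" by (auto simp: supp_def)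
  have fA: "finite ?A" using assms by simp
  show ?thesis
    unfolding Ymode_eq_sum_superset[OF fA s(1) assms(1) order_refl] Ymode_eq_sum_superset[OF fA s(2) assms(1) order_refl]
      Ymode_eq_sum_superset[OF fA s(3) assms(1) order_refl]
    by (simp add: algebra_simps sum.distrib)
qed

lemma Ymode_scale_left: assumes "finite (supp w)" "finite (supp f)"
  shows "Ymode (\<lambda>bb. c * f bb) N w b = c * Ymode f N w b"
proof -
  have s: "supp (\<lambda>bb. c * f bb) \<subseteq> supp f" by (auto simp: supp_def)
  show ?thesis
    unfolding Ymode_eq_sum_superset[OF assms(2) s assms(1) order_refl] Ymode_eq_sum_superset[OF assms(2) order_refl assms(1) order_refl]
    by (simp add: sum_distrib_left algebra_simps)
qed

lemma Ymode_sum_left: assumes "finite (supp w)" "finite K" "\<forall>k\<in>K. finite (supp (f k))"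
  shows "Ymode (\<lambda>bb. \<Sum>k\<in>K. f k bb) N w b = (\<Sum>k\<in>K. Ymode (f k) N w b)"
proof -
  let ?A = "\<Union>k\<in>K. supp (f k)"
  have fA: "finite ?A" using assms by auto
  have s: "supp (\<lambda>bb. \<Sum>k\<in>K. f k bb) \<subseteq> ?A"
  proof
    fix b assume "b \<in> supp (\<lambda>bb. \<Sum>k\<in>K. f k bb)"
    then have "(\<Sum>k\<in>K. f k b) \<noteq> 0" by (simp add: supp_def)
    then obtain k where "k \<in> K" "f k b \<noteq> 0" by (rule sum.not_neutral_contains_not_neutral)
    then show "b \<in> ?A" by (auto simp: supp_def)
  qed
  have sk: "\<And>k. k \<in> K \<Longrightarrow> supp (f k) \<subseteq> ?A" by auto
  have "Ymode (\<lambda>bb. \<Sum>k\<in>K. f k bb) N w b = (\<Sum>bv\<in>?A. \<Sum>bw\<in>supp w. (\<Sum>k\<in>K. f k bv) * w bw * Ybas bv N bw b)"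
    by (rule Ymode_eq_sum_superset[OF fA s assms(1) order_refl])
  also have "\<dots> = (\<Sum>k\<in>K. \<Sum>bv\<in>?A. \<Sum>bw\<in>supp w. f k bv * w bw * Ybas bv N bw b)"
    by (simp add: sum_distrib_left sum_distrib_right sum.swap[of _ K] algebra_simps)
  also have "\<dots> = (\<Sum>k\<in>K. Ymode (f k) N w b)"
    by (rule sum.cong[OF refl]) (simp add: Ymode_eq_sum_superset[OF fA sk assms(1) order_refl])
  finally show ?thesis .
qed

lemma Ymode_bvec_bvec: "Ymode (bvec bv) N (bvec bw) b = Ybas bv N bw b"
  unfolding Ymode_def supp_bvec by (simp add: bvec_def)

lemma Ymode_zero_left: "Ymode (\<lambda>_. 0) N w b = 0"
  by (simp add: Ymode_def supp_def)

lemma Ymode_comb1_right: assumes "finite (supp v)" "finite K"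
  shows "Ymode v N (\<lambda>bb. \<Sum>k\<in>K. c k * bvec (g k) bb) b = (\<Sum>k\<in>K. c k * Ymode v N (bvec (g k)) b)"
  by (subst Ymode_sum_right) (auto intro: finite_supp_scale finite_supp_bvec simp: assms Ymode_scale_right finite_supp_bvec)

lemma Ymode_comb2_right: assumes "finite (supp v)" "finite K" "finite L"
  shows "Ymode v N (\<lambda>bb. \<Sum>k\<in>K. \<Sum>l\<in>L. c k l * bvec (g k l) bb) b = (\<Sum>k\<in>K. \<Sum>l\<in>L. c k l * Ymode v N (bvec (g k l)) b)"
  by (subst Ymode_sum_right) (auto intro: finite_supp_comb1 simp: assms Ymode_comb1_right)

lemma Ymode_comb1_left: assumes "finite (supp w)" "finite K"
  shows "Ymode (\<lambda>bb. \<Sum>k\<in>K. c k * bvec (g k) bb) N w b = (\<Sum>k\<in>K. c k * Ymode (bvec (g k)) N w b)"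
  by (subst Ymode_sum_left) (auto intro: finite_supp_scale finite_supp_bvec simp: assms Ymode_scale_left finite_supp_bvec)

lemma Ymode_comb2_left: assumes "finite (supp w)" "finite K" "finite L"
  shows "Ymode (\<lambda>bb. \<Sum>k\<in>K. \<Sum>l\<in>L. c k l * bvec (g k l) bb) N w b = (\<Sum>k\<in>K. \<Sum>l\<in>L. c k l * Ymode (bvec (g k l)) N w b)"
  by (subst Ymode_sum_left) (auto intro: finite_supp_comb1 simp: assms Ymode_comb1_left)

section \<open>The conformal vector\<close>

text \<open>The inverse of the Gram matrix of \<open>E\<^sub>8\<close>; it is integral because \<open>E\<^sub>8\<close> is unimodular.\<close>

definition gram_inv_rows :: "int list list" where
  "gram_inv_rows = [[2,3,4,5,6,4,2,3],[3,6,8,10,12,8,4,6],[4,8,12,15,18,12,6,9],[5,10,15,20,24,16,8,12],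
         [6,12,18,24,30,20,10,15],[4,8,12,16,20,14,7,10],[2,4,6,8,10,7,4,5],[3,6,9,12,15,10,5,8]]"

definition gram_inv :: "nat \<Rightarrow> nat \<Rightarrow> int" where
  "gram_inv a b = (if a \<in> {1..8} \<and> b \<in> {1..8} then gram_inv_rows ! (a - 1) ! (b - 1) else 0)"

lemma gram_mult_gram_inv: assumes "a \<in> {1..8}" "b \<in> {1..8}" shows "(\<Sum>c\<in>{1..8}. gram a c * gram_inv c b) = (if a = b then 1 else 0)"
  using assms unfolding mem_1_8 sum_1_8 by (elim disjE) (simp_all add: gram_rows gram_rows(1)[unfolded One_nat_def] gram_inv_def gram_inv_rows_def)

lemma gram_inv_mult_gram: assumes "a \<in> {1..8}" "b \<in> {1..8}" shows "(\<Sum>c\<in>{1..8}. gram_inv a c * gram c b) = (if a = b then 1 else 0)"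
  using assms unfolding mem_1_8 sum_1_8 by (elim disjE) (simp_all add: gram_rows gram_rows(1)[unfolded One_nat_def] gram_inv_def gram_inv_rows_def)

lemma sum_1_8_delta: assumes "a \<in> {1..8}" shows "(\<Sum>e\<in>{1..8::nat}. (if a = e then 1 else 0) * f e) = (f a :: complex)"
proof -
  have "(\<Sum>e\<in>{1..8::nat}. (if a = e then 1 else 0) * f e) = (\<Sum>e\<in>{1..8::nat}. if a = e then f e else 0)"
    by (rule sum.cong) auto
  also have "\<dots> = f a" by (subst sum.delta'[OF finite_atLeastAtMost]) (use assms in simp)
  finally show ?thesis .
qed

lemma sum_1_8_delta': assumes "a \<in> {1..8}" shows "(\<Sum>e\<in>{1..8::nat}. f e * (if e = a then 1 else 0)) = (f a :: complex)"
proof -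
  have "(\<Sum>e\<in>{1..8::nat}. f e * (if e = a then 1 else 0)) = (\<Sum>e\<in>{1..8::nat}. if e = a then f e else 0)"
    by (rule sum.cong) auto
  also have "\<dots> = f a" by (subst sum.delta[OF finite_atLeastAtMost]) (use assms in simp)
  finally show ?thesis .
qed

lemma gram_inv_is_inverse: "(\<forall>a\<in>{1..8}. \<forall>b\<in>{1..8}. (\<Sum>c = 1..8. of_int (gram a c) * (of_int (gram_inv c b) :: complex)) = (if a = b then 1 else 0)) \<and>
    (\<forall>a b. a \<notin> {1..8} \<or> b \<notin> {1..8} \<longrightarrow> (of_int (gram_inv a b) :: complex) = 0)"
proof (intro conjI ballI allI impI)
  fix a b :: nat assume ab: "a \<in> {1..8}" "b \<in> {1..8}"
  have "(\<Sum>c = 1..8. of_int (gram a c) * (of_int (gram_inv c b) :: complex)) = of_int (\<Sum>c = 1..8. gram a c * gram_inv c b)"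
    by simp
  also have "\<dots> = (if a = b then 1 else 0)" using gram_mult_gram_inv[OF ab] by simp
  finally show "(\<Sum>c = 1..8. of_int (gram a c) * (of_int (gram_inv c b) :: complex)) = (if a = b then 1 else 0)" .
next
  fix a b :: nat assume "a \<notin> {1..8} \<or> b \<notin> {1..8}"
  then show "(of_int (gram_inv a b) :: complex) = 0" by (auto simp: gram_inv_def)
qed

text \<open>A right inverse equals the left inverse \<^const>\<open>gram_inv\<close>.\<close>

lemma gram_right_inverse_unique:
  fixes X :: "nat \<Rightarrow> nat \<Rightarrow> complex"
  assumes X: "(\<forall>a\<in>{1..8}. \<forall>b\<in>{1..8}. (\<Sum>c = 1..8. of_int (gram a c) * X c b) = (if a = b then 1 else 0)) \<and>
    (\<forall>a b. a \<notin> {1..8} \<or> b \<notin> {1..8} \<longrightarrow> X a b = 0)"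
  shows "X = (\<lambda>a b. of_int (gram_inv a b))"
proof (intro ext)
  fix a b :: nat
  show "X a b = of_int (gram_inv a b)"
  proof (cases "a \<in> {1..8} \<and> b \<in> {1..8}")
    case False then show ?thesis using X by (auto simp: gram_inv_def)
  next
    case True
    then have a: "a \<in> {1..8}" and b: "b \<in> {1..8}" by auto
    have "X a b = (\<Sum>e\<in>{1..8}. (if a = e then 1 else 0) * X e b)" using sum_1_8_delta[OF a] by simp
    also have "\<dots> = (\<Sum>e\<in>{1..8}. (\<Sum>c\<in>{1..8}. of_int (gram_inv a c) * of_int (gram c e)) * X e b)"
      by (rule sum.cong[OF refl]) (use gram_inv_mult_gram[OF a] in \<open>simp flip: of_int_mult of_int_sum\<close>)
    also have "\<dots> = (\<Sum>c\<in>{1..8}. \<Sum>e\<in>{1..8}. of_int (gram_inv a c) * (of_int (gram c e) * X e b))"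
      by (simp add: sum_distrib_right mult.assoc) (rule sum.swap)
    also have "\<dots> = (\<Sum>c\<in>{1..8}. of_int (gram_inv a c) * (\<Sum>e\<in>{1..8}. of_int (gram c e) * X e b))"
      by (simp add: sum_distrib_left)
    also have "\<dots> = (\<Sum>c\<in>{1..8}. of_int (gram_inv a c) * (if c = b then 1 else 0))"
      by (rule sum.cong[OF refl]) (use X b in auto)
    also have "\<dots> = of_int (gram_inv a b)" by (rule sum_1_8_delta'[OF b])
    finally show ?thesis .
  qed
qed

lemma cartan_inv_eq: "cartan_inv = (\<lambda>a b. of_int (gram_inv a b))"
  unfolding cartan_inv_def using gram_inv_is_inverse gram_right_inverse_unique by (rule the_equality)

lemma ip_sr_row: assumes "a \<in> {1..8}" shows "ip (sr a) y = (\<Sum>b\<in>{1..8}. gram a b * y b)"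
proof -
  have "ip (sr a) y = (\<Sum>a'\<in>{1..8}. if a' = a then (\<Sum>b\<in>{1..8}. gram a' b * y b) else 0)"
    unfolding ip_def
  proof (rule sum.cong[OF refl])
    fix a' assume "a' \<in> {1..8::nat}"
    show "(\<Sum>b = 1..8. sr a a' * gram a' b * y b) = (if a' = a then \<Sum>b\<in>{1..8}. gram a' b * y b else 0)"
      using assms by (simp add: sr_simple)
  qed
  also have "\<dots> = (\<Sum>b\<in>{1..8}. gram a b * y b)" using assms by (simp add: sum.delta')
  finally show ?thesis .
qed

lemma ip_sr_sr: assumes "a \<in> {1..8}" "c \<in> {1..8}" shows "ip (sr a) (sr c) = gram a c"
proof -
  have "ip (sr a) (sr c) = (\<Sum>b\<in>{1..8}. gram a b * (if b = c then 1 else 0))"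
    unfolding ip_sr_row[OF assms(1)] using assms(2) by (intro sum.cong) (auto simp: sr_simple)
  also have "\<dots> = gram a c" using assms(2) by (simp add: if_distrib sum.delta' cong: if_cong)
  finally show ?thesis .
qed

lemma sum_ip_sr_cartan_inv: assumes "a \<in> {1..8}" "d \<in> {1..8}"
  shows "(\<Sum>c\<in>{1..8}. of_int (ip (sr a) (sr c)) * cartan_inv c d) = (if a = d then 1 else 0)"
proof -
  have "(\<Sum>c\<in>{1..8}. of_int (ip (sr a) (sr c)) * cartan_inv c d) = (\<Sum>c\<in>{1..8}. of_int (gram a c * gram_inv c d))"
  proof (rule sum.cong[OF refl])
    fix c assume c: "c \<in> {1..8::nat}"
    show "of_int (ip (sr a) (sr c)) * cartan_inv c d = of_int (gram a c * gram_inv c d)"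
      using ip_sr_sr[OF assms(1) c] by (simp add: cartan_inv_eq)
  qed
  also have "\<dots> = of_int (\<Sum>c\<in>{1..8}. gram a c * gram_inv c d)" by (simp only: of_int_sum)
  finally have "(\<Sum>c\<in>{1..8}. of_int (ip (sr a) (sr c)) * cartan_inv c d) = of_int (\<Sum>c\<in>{1..8}. gram a c * gram_inv c d)" .
  then show ?thesis by (simp only: gram_mult_gram_inv[OF assms]) simp
qed

lemma sum_cartan_inv_ip_sr: assumes "a \<in> {1..8}" "c \<in> {1..8}"
  shows "(\<Sum>d\<in>{1..8}. cartan_inv c d * of_int (ip (sr a) (sr d))) = (if c = a then 1 else 0)"
proof -
  have "(\<Sum>d\<in>{1..8}. cartan_inv c d * of_int (ip (sr a) (sr d))) = (\<Sum>d\<in>{1..8}. of_int (gram_inv c d * gram d a))"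
  proof (rule sum.cong[OF refl])
    fix d assume d: "d \<in> {1..8::nat}"
    show "cartan_inv c d * of_int (ip (sr a) (sr d)) = of_int (gram_inv c d * gram d a)"
      using ip_sr_sr[OF assms(1) d] gram_commute[of a d] by (simp add: cartan_inv_eq)
  qed
  also have "\<dots> = of_int (\<Sum>d\<in>{1..8}. gram_inv c d * gram d a)" by (simp only: of_int_sum)
  finally have "(\<Sum>d\<in>{1..8}. cartan_inv c d * of_int (ip (sr a) (sr d))) = of_int (\<Sum>d\<in>{1..8}. gram_inv c d * gram d a)" .
  then show ?thesis by (simp only: gram_inv_mult_gram[OF assms(2) assms(1)]) simp
qed

lemma cartan_inv_contract_left: assumes "a \<in> {1..8}"
  shows "(\<Sum>c\<in>{1..8}. \<Sum>d\<in>{1..8}. cartan_inv c d * (of_int (ip (sr a) (sr c)) * F d)) = (F a :: complex)"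
proof -
  have "(\<Sum>c\<in>{1..8}. \<Sum>d\<in>{1..8}. cartan_inv c d * (of_int (ip (sr a) (sr c)) * F d))
      = (\<Sum>d\<in>{1..8}. \<Sum>c\<in>{1..8}. of_int (ip (sr a) (sr c)) * cartan_inv c d * F d)"
    by (subst sum.swap) (simp add: algebra_simps)
  also have "\<dots> = (\<Sum>d\<in>{1..8}. (\<Sum>c\<in>{1..8}. of_int (ip (sr a) (sr c)) * cartan_inv c d) * F d)"
    by (simp add: sum_distrib_right)
  also have "\<dots> = (\<Sum>d\<in>{1..8}. (if a = d then 1 else 0) * F d)"
  proof (rule sum.cong[OF refl])
    fix d assume d: "d \<in> {1..8::nat}"
    show "(\<Sum>c\<in>{1..8}. of_int (ip (sr a) (sr c)) * cartan_inv c d) * F d = (if a = d then 1 else 0) * F d"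
      using sum_ip_sr_cartan_inv[OF assms d] by simp
  qed
  also have "\<dots> = F a" by (rule sum_1_8_delta[OF assms])
  finally show ?thesis .
qed

lemma cartan_inv_contract_right: assumes "a \<in> {1..8}"
  shows "(\<Sum>c\<in>{1..8}. \<Sum>d\<in>{1..8}. cartan_inv c d * (of_int (ip (sr a) (sr d)) * F c)) = (F a :: complex)"
proof -
  have "(\<Sum>c\<in>{1..8}. \<Sum>d\<in>{1..8}. cartan_inv c d * (of_int (ip (sr a) (sr d)) * F c))
      = (\<Sum>c\<in>{1..8}. (\<Sum>d\<in>{1..8}. cartan_inv c d * of_int (ip (sr a) (sr d))) * F c)"
    by (rule sum.cong[OF refl]) (simp add: sum_distrib_right mult.assoc)
  also have "\<dots> = (\<Sum>c\<in>{1..8}. F c * (if c = a then 1 else 0))"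
  proof (rule sum.cong[OF refl])
    fix c assume c: "c \<in> {1..8::nat}"
    show "(\<Sum>d\<in>{1..8}. cartan_inv c d * of_int (ip (sr a) (sr d))) * F c = F c * (if c = a then 1 else 0)"
      using sum_cartan_inv_ip_sr[OF assms c] by simp
  qed
  also have "\<dots> = F a" by (rule sum_1_8_delta'[OF assms])
  finally show ?thesis .
qed

lemma sum_swap3: "(\<Sum>a\<in>A. \<Sum>c\<in>C. \<Sum>d\<in>D. f a c d) = (\<Sum>c\<in>C. \<Sum>d\<in>D. \<Sum>a\<in>A. f a c d)"
  by (subst sum.swap) (rule sum.cong[OF refl], rule sum.swap)

lemma cartan_inv_quadratic_form: "(\<Sum>c\<in>{1..8}. \<Sum>d\<in>{1..8}. cartan_inv c d * (of_int (ip \<beta> (sr c)) * of_int (ip \<beta> (sr d)))) = (of_int (ip \<beta> \<beta>) :: complex)"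
proof -
  have "(\<Sum>c\<in>{1..8}. \<Sum>d\<in>{1..8}. cartan_inv c d * (of_int (ip \<beta> (sr c)) * of_int (ip \<beta> (sr d))))
    = (\<Sum>c\<in>{1..8}. \<Sum>d\<in>{1..8}. cartan_inv c d * ((\<Sum>a\<in>{1..8}. of_int (\<beta> a) * of_int (ip (sr a) (sr c))) * of_int (ip \<beta> (sr d))))"
    by (simp only: sum_coord_ip_sr)
  also have "\<dots> = (\<Sum>c\<in>{1..8}. \<Sum>d\<in>{1..8}. \<Sum>a\<in>{1..8}. of_int (\<beta> a) * (cartan_inv c d * (of_int (ip (sr a) (sr c)) * of_int (ip \<beta> (sr d)))))"
    by (intro sum.cong refl) (simp add: sum_distrib_left sum_distrib_right algebra_simps)
  also have "\<dots> = (\<Sum>a\<in>{1..8}. \<Sum>c\<in>{1..8}. \<Sum>d\<in>{1..8}. of_int (\<beta> a) * (cartan_inv c d * (of_int (ip (sr a) (sr c)) * of_int (ip \<beta> (sr d)))))"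
    by (rule sum_swap3[symmetric])
  also have "\<dots> = (\<Sum>a\<in>{1..8}. of_int (\<beta> a) * (\<Sum>c\<in>{1..8}. \<Sum>d\<in>{1..8}. cartan_inv c d * (of_int (ip (sr a) (sr c)) * of_int (ip \<beta> (sr d)))))"
    by (simp add: sum_distrib_left)
  also have "\<dots> = (\<Sum>a\<in>{1..8}. of_int (\<beta> a) * of_int (ip \<beta> (sr a)))"
  proof (rule sum.cong[OF refl])
    fix a assume a: "a \<in> {1..8::nat}"
    show "of_int (\<beta> a) * (\<Sum>c\<in>{1..8}. \<Sum>d\<in>{1..8}. cartan_inv c d * (of_int (ip (sr a) (sr c)) * of_int (ip \<beta> (sr d))))
      = of_int (\<beta> a) * of_int (ip \<beta> (sr a))"
      by (simp only: cartan_inv_contract_left[OF a])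
  qed
  also have "\<dots> = (\<Sum>a\<in>{1..8}. of_int (\<beta> a) * of_int (ip (sr a) \<beta>))"
    by (simp add: ip_commute[of \<beta>])
  also have "\<dots> = of_int (ip \<beta> \<beta>)" by (rule sum_coord_ip_sr)
  finally show ?thesis .
qed

lemma omega_eq: "omega = (\<lambda>bb. \<Sum>c\<in>{1..8}. \<Sum>d\<in>{1..8}. (cartan_inv c d / 2) * bvec ({#(c,1), (d,1)#}, vac_lat) bb)"
  unfolding omega_def by (rule ext) (simp add: sum_distrib_left)

lemma finite_supp_omega: "finite (supp omega)" unfolding omega_eq by (rule finite_supp_comb2) auto

lemma finite_supp_hh: "finite (supp (hh x))" unfolding hh_def by (rule finite_supp_comb2) auto

lemma finite_supp_ee: "finite (supp (ee x))" unfolding ee_def by (rule finite_supp_bvec)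

definition tvec :: "lat \<Rightarrow> vvec" where
  "tvec x = (\<lambda>bb. hh x bb - 2 * (ee x bb + ee (neg x) bb))"

lemma finite_supp_tvec: "finite (supp (tvec x))"
proof (rule finite_subset)
  show "supp (tvec x) \<subseteq> supp (hh x) \<union> supp (ee x) \<union> supp (ee (neg x))"
    by (auto simp: supp_def tvec_def)
  show "finite (supp (hh x) \<union> supp (ee x) \<union> supp (ee (neg x)))"
    using finite_supp_hh finite_supp_ee by blast
qed

lemma bvec_pair_commute: "bvec ({#(b,1), (a,1)#}, g) = bvec ({#(a,1), (b,1)#}, g)"
  by (simp add: add_mset_commute)

lemma Y1_pair_omega: assumes "a \<in> {1..8}" "b \<in> {1..8}"
  shows "Ymode (bvec ({#(a,1), (b,1)#}, vac_lat)) 1 omega b' = 2 * bvec ({#(a,1), (b,1)#}, vac_lat) b'"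
proof -
  let ?B = "\<lambda>x y. bvec ({#(x,1), (y,1)#}, vac_lat) b'"
  have "Ymode (bvec ({#(a,1), (b,1)#}, vac_lat)) 1 omega b' =
     (\<Sum>c\<in>{1..8}. \<Sum>d\<in>{1..8}. (cartan_inv c d / 2) * Ybas ({#(a,1), (b,1)#}, vac_lat) 1 ({#(c,1), (d,1)#}, vac_lat) b')"
    unfolding omega_eq by (subst Ymode_comb2_right) (simp_all add: finite_supp_bvec Ymode_bvec_bvec)
  also have "\<dots> = (1/2) * ((\<Sum>c\<in>{1..8}. \<Sum>d\<in>{1..8}. cartan_inv c d * (of_int (ip (sr a) (sr c)) * ?B b d))
     + (\<Sum>c\<in>{1..8}. \<Sum>d\<in>{1..8}. cartan_inv c d * (of_int (ip (sr a) (sr d)) * ?B b c))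
     + (\<Sum>c\<in>{1..8}. \<Sum>d\<in>{1..8}. cartan_inv c d * (of_int (ip (sr b) (sr c)) * ?B a d))
     + (\<Sum>c\<in>{1..8}. \<Sum>d\<in>{1..8}. cartan_inv c d * (of_int (ip (sr b) (sr d)) * ?B a c)))"
    unfolding Ybas_pair_pair by (simp add: sum.distrib sum_distrib_left algebra_simps)
  also have "\<dots> = (1/2) * (?B b a + ?B b a + ?B a b + ?B a b)"
    by (simp only: cartan_inv_contract_left[OF assms(1)] cartan_inv_contract_right[OF assms(1)] cartan_inv_contract_left[OF assms(2)] cartan_inv_contract_right[OF assms(2)])
  also have "\<dots> = 2 * ?B a b" unfolding bvec_pair_commute[of b a] by simp
  finally show ?thesis .
qed

lemma Y1_ee_omega: "Ymode (ee \<beta>) 1 omega b' = of_int (ip \<beta> \<beta>) * ee \<beta> b'"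
proof -
  have "Ymode (ee \<beta>) 1 omega b' =
     (\<Sum>c\<in>{1..8}. \<Sum>d\<in>{1..8}. (cartan_inv c d / 2) * Ybas ({#}, \<beta>) 1 ({#(c,1), (d,1)#}, vac_lat) b')"
    unfolding omega_eq ee_def by (subst Ymode_comb2_right) (simp_all add: finite_supp_bvec Ymode_bvec_bvec)
  also have "\<dots> = (\<Sum>c\<in>{1..8}. \<Sum>d\<in>{1..8}. cartan_inv c d * (of_int (ip \<beta> (sr c)) * of_int (ip \<beta> (sr d)))) * ee \<beta> b'"
    unfolding Ybas_ee_pair ee_def sum_distrib_right by (intro sum.cong refl) (simp add: algebra_simps)
  also have "\<dots> = of_int (ip \<beta> \<beta>) * ee \<beta> b'" by (simp only: cartan_inv_quadratic_form)
  finally show ?thesis .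
qed

lemma Y1_hh_omega: "Ymode (hh x) 1 omega b' = 2 * hh x b'"
proof -
  have "Ymode (hh x) 1 omega b' = (\<Sum>a\<in>{1..8}. \<Sum>b\<in>{1..8}. of_int (x a * x b) * Ymode (bvec ({#(a,1), (b,1)#}, vac_lat)) 1 omega b')"
    unfolding hh_def by (rule Ymode_comb2_left) (simp_all add: finite_supp_omega)
  also have "\<dots> = (\<Sum>a\<in>{1..8}. \<Sum>b\<in>{1..8}. 2 * (of_int (x a * x b) * bvec ({#(a,1), (b,1)#}, vac_lat) b'))"
  proof (intro sum.cong refl)
    fix a b assume a: "a \<in> {1..8::nat}" and b: "b \<in> {1..8::nat}"
    show "of_int (x a * x b) * Ymode (bvec ({#(a,1), (b,1)#}, vac_lat)) 1 omega b' = 2 * (of_int (x a * x b) * bvec ({#(a,1), (b,1)#}, vac_lat) b')"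
      unfolding Y1_pair_omega[OF a b] by simp
  qed
  also have "\<dots> = 2 * hh x b'" unfolding hh_def by (simp add: sum_distrib_left)
  finally show ?thesis .
qed

lemma Ymode_tvec_left:
  assumes "finite (supp w)"
  shows "Ymode (tvec x) N w b = Ymode (hh x) N w b - 2 * (Ymode (ee x) N w b + Ymode (ee (neg x)) N w b)"
proof -
  have f: "finite (supp (\<lambda>bb. ee x bb + ee (neg x) bb))" by (intro finite_supp_add finite_supp_ee)
  have "tvec x = (\<lambda>bb. hh x bb + (-2) * (ee x bb + ee (neg x) bb))"
    by (simp add: tvec_def fun_eq_iff)
  then show ?thesis
    using Ymode_add_left[OF assms finite_supp_hh finite_supp_scale[OF f], of x "-2" N b]
      Ymode_scale_left[OF assms f, of "-2" N b] Ymode_add_left[OF assms finite_supp_ee finite_supp_ee, of x "neg x" N b]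
    by simp
qed

lemma Y1_tvec_omega: assumes "ip x x = 2" shows "Ymode (tvec x) 1 omega b' = 2 * tvec x b'"
proof -
  have "ip (neg x) (neg x) = 2" using assms by (simp add: ip_neg_left ip_neg_right)
  then show ?thesis
    unfolding Ymode_tvec_left[OF finite_supp_omega] Y1_ee_omega Y1_hh_omega
    using assms by (simp add: tvec_def algebra_simps)
qed

section \<open>Root vectors\<close>

definition dvec :: "lat \<Rightarrow> vvec" where
  "dvec x = (\<lambda>b'. (1/2) * (\<Sum>a\<in>{1..8}. sqrt2_vec x a * bvec ({#(a,2)#}, vac_lat) b'))"

lemma hmode_m1_bvec: "hmode c (-1) (bvec (M, g)) = (\<lambda>b'. \<Sum>a\<in>{1..8}. c a * bvec (add_mset (a,1) M, g) b')"
  by (rule ext) (simp add: hmode_def heis_neg_bvec)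

lemma hmode_m2_bvec: "hmode c (-2) (bvec (M, g)) = (\<lambda>b'. \<Sum>a\<in>{1..8}. c a * bvec (add_mset (a,2) M, g) b')"
  by (rule ext) (simp add: hmode_def heis_neg_bvec)

lemma sqrt2_vec_mult_bvec: "sqrt2_vec x a * (sqrt2_vec x a' * bvec (add_mset (a',1) {#(a,1)#}, vac_lat) b') = 2 * (of_int (x a * x a') * bvec ({#(a,1), (a',1)#}, vac_lat) b')"
proof -
  have "sqrt2_vec x a * (sqrt2_vec x a' * bvec (add_mset (a',1) {#(a,1)#}, vac_lat) b') =
      (complex_of_real (sqrt 2) * complex_of_real (sqrt 2)) * (of_int (x a) * of_int (x a')) * bvec ({#(a,1), (a',1)#}, vac_lat) b'"
    unfolding sqrt2_vec_def bvec_pair_commute[of a' a, symmetric] by (simp add: algebra_simps)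
  then show ?thesis unfolding sqrt2_sq by simp
qed

lemma Eminus_sqrt2_vec_2_vac: "Eminus (sqrt2_vec x) 2 (bvec ({#}, vac_lat)) b' = hh x b' + dvec x b'"
proof -
  have A: "hmode (sqrt2_vec x) (-1) (hmode (sqrt2_vec x) (-1) (bvec ({#}, vac_lat))) b' =
     (\<Sum>a\<in>{1..8}. sqrt2_vec x a * (\<Sum>a'\<in>{1..8}. sqrt2_vec x a' * bvec (add_mset (a',1) {#(a,1)#}, vac_lat) b'))"
    unfolding hmode_m1_bvec
    by (subst hmode_sum) (auto intro: finite_supp_scale finite_supp_bvec simp: hmode_scale hmode_m1_bvec)
  also have "\<dots> = (\<Sum>a\<in>{1..8}. \<Sum>a'\<in>{1..8}. 2 * (of_int (x a * x a') * bvec ({#(a,1), (a',1)#}, vac_lat) b'))"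
    unfolding sum_distrib_left by (intro sum.cong refl) (rule sqrt2_vec_mult_bvec)
  also have "\<dots> = 2 * hh x b'" unfolding hh_def by (simp add: sum_distrib_left)
  finally have A': "hmode (sqrt2_vec x) (-1) (hmode (sqrt2_vec x) (-1) (bvec ({#}, vac_lat))) b' = 2 * hh x b'" .
  have B: "hmode (sqrt2_vec x) (-2) (bvec ({#}, vac_lat)) b' = 2 * dvec x b'"
    unfolding hmode_m2_bvec dvec_def by simp
  show ?thesis unfolding Eminus_2 A' B by simp
qed

lemma hh_neg: "hh (neg x) = hh x" by (simp add: hh_def neg_def)

lemma dvec_neg: "dvec (neg x) b' = - dvec x b'"
  by (simp add: dvec_def sqrt2_vec_def neg_def sum_negf[symmetric])

lemma Ybas_root_root: assumes x: "x \<in> PhiE8" and g: "\<gamma> \<in> PhiE8"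
  shows "Ybas ({#}, x) 1 ({#}, \<gamma>) b' = (if ip x \<gamma> = -1 then ee (\<lambda>k. \<gamma> k + x k) b'
      else if ip x \<gamma> = -2 then hh x b' + dvec x b' else 0)"
proof -
  have lo: "-2 \<le> ip x \<gamma>" using root_ip_bounds[OF x g] by simp
  show ?thesis
  proof (cases "ip x \<gamma> = -1")
    case True
    then show ?thesis unfolding Ybas_ee_ee by (simp add: Eminus_0 ee_def)
  next
    case False
    show ?thesis
    proof (cases "ip x \<gamma> = -2")
      case True
      then have "\<gamma> = neg x" using root_ip_eq_neg2_iff[OF x g] by simp
      then have v: "(\<lambda>k. \<gamma> k + x k) = vac_lat" by (simp add: neg_def vac_lat_def)
      have "nat (- 1 - 1 - 2 * ip x \<gamma>) = 2" using True by simp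
      then show ?thesis unfolding Ybas_ee_ee using True v by (simp add: Eminus_sqrt2_vec_2_vac)
    next
      case False
      then have "0 \<le> ip x \<gamma>" using lo \<open>ip x \<gamma> \<noteq> -1\<close> by simp
      then show ?thesis unfolding Ybas_ee_ee using \<open>ip x \<gamma> \<noteq> -1\<close> False by simp
    qed
  qed
qed

definition root_comb :: "(lat \<Rightarrow> complex) \<Rightarrow> vvec" where
  "root_comb wt = (\<lambda>bb. \<Sum>\<gamma>\<in>PhiE8. wt \<gamma> * bvec ({#}, \<gamma>) bb)"

lemma finite_supp_root_comb: "finite (supp (root_comb wt))" unfolding root_comb_def by (rule finite_supp_comb1[OF finite_PhiE8])

definition level_sum :: "(lat \<Rightarrow> complex) \<Rightarrow> lat \<Rightarrow> int \<Rightarrow> bas \<Rightarrow> complex" where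
  "level_sum wt y k b' = (\<Sum>\<gamma>\<in>PhiE8. if ip y \<gamma> = k then wt \<gamma> * ee \<gamma> b' else 0)"

lemma Y1_hh_root_comb: "Ymode (hh x) 1 (root_comb wt) b' = (\<Sum>\<gamma>\<in>PhiE8. wt \<gamma> * (2 * of_int ((ip x \<gamma>)^2) * ee \<gamma> b'))"
proof -
  have "Ymode (hh x) 1 (root_comb wt) b' = (\<Sum>a\<in>{1..8}. \<Sum>b\<in>{1..8}. of_int (x a * x b) * Ymode (bvec ({#(a,1), (b,1)#}, vac_lat)) 1 (root_comb wt) b')"
    unfolding hh_def by (rule Ymode_comb2_left) (simp_all add: finite_supp_root_comb)
  also have "\<dots> = (\<Sum>a\<in>{1..8}. \<Sum>b\<in>{1..8}. \<Sum>\<gamma>\<in>PhiE8. of_int (x a * x b) * (wt \<gamma> * (2 * of_int (ip (sr a) \<gamma> * ip (sr b) \<gamma>) * ee \<gamma> b')))"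
  proof (intro sum.cong refl)
    fix a b
    have "Ymode (bvec ({#(a,1), (b,1)#}, vac_lat)) 1 (root_comb wt) b' = (\<Sum>\<gamma>\<in>PhiE8. wt \<gamma> * Ymode (bvec ({#(a,1), (b,1)#}, vac_lat)) 1 (bvec ({#}, \<gamma>)) b')"
      unfolding root_comb_def by (rule Ymode_comb1_right) (simp_all add: finite_supp_bvec finite_PhiE8)
    also have "\<dots> = (\<Sum>\<gamma>\<in>PhiE8. wt \<gamma> * (2 * of_int (ip (sr a) \<gamma> * ip (sr b) \<gamma>) * ee \<gamma> b'))"
      unfolding Ymode_bvec_bvec Ybas_pair_ee ee_def ..
    finally show "of_int (x a * x b) * Ymode (bvec ({#(a,1), (b,1)#}, vac_lat)) 1 (root_comb wt) b' =
      (\<Sum>\<gamma>\<in>PhiE8. of_int (x a * x b) * (wt \<gamma> * (2 * of_int (ip (sr a) \<gamma> * ip (sr b) \<gamma>) * ee \<gamma> b')))"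
      by (simp add: sum_distrib_left)
  qed
  also have "\<dots> = (\<Sum>\<gamma>\<in>PhiE8. \<Sum>a\<in>{1..8}. \<Sum>b\<in>{1..8}. of_int (x a * x b) * (wt \<gamma> * (2 * of_int (ip (sr a) \<gamma> * ip (sr b) \<gamma>) * ee \<gamma> b')))"
    by (rule sum_swap3[symmetric])
  also have "\<dots> = (\<Sum>\<gamma>\<in>PhiE8. wt \<gamma> * (2 * of_int ((ip x \<gamma>)^2) * ee \<gamma> b'))"
  proof (rule sum.cong[OF refl])
    fix \<gamma>
    have "(\<Sum>a\<in>{1..8}. \<Sum>b\<in>{1..8}. of_int (x a * x b) * (wt \<gamma> * (2 * of_int (ip (sr a) \<gamma> * ip (sr b) \<gamma>) * ee \<gamma> b')))
      = (wt \<gamma> * 2 * ee \<gamma> b') * ((\<Sum>a\<in>{1..8}. of_int (x a) * of_int (ip (sr a) \<gamma>)) * (\<Sum>b\<in>{1..8}. of_int (x b) * of_int (ip (sr b) \<gamma>)))"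
      by (simp add: sum_product sum_distrib_left algebra_simps)
    also have "\<dots> = wt \<gamma> * (2 * of_int ((ip x \<gamma>)^2) * ee \<gamma> b')"
      by (simp only: sum_coord_ip_sr) (simp add: power2_eq_square algebra_simps)
    finally show "(\<Sum>a\<in>{1..8}. \<Sum>b\<in>{1..8}. of_int (x a * x b) * (wt \<gamma> * (2 * of_int (ip (sr a) \<gamma> * ip (sr b) \<gamma>) * ee \<gamma> b')))
      = wt \<gamma> * (2 * of_int ((ip x \<gamma>)^2) * ee \<gamma> b')" .
  qed
  finally show ?thesis .
qed

lemma Y1_ee_root_comb: assumes x: "x \<in> PhiE8"
  shows "Ymode (ee x) 1 (root_comb wt) b' = (\<Sum>\<gamma>\<in>PhiE8. if ip x \<gamma> = -1 then wt \<gamma> * ee (\<lambda>k. \<gamma> k + x k) b' else 0)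
     + wt (neg x) * (hh x b' + dvec x b')"
proof -
  have "Ymode (ee x) 1 (root_comb wt) b' = (\<Sum>\<gamma>\<in>PhiE8. wt \<gamma> * Ymode (ee x) 1 (bvec ({#}, \<gamma>)) b')"
    unfolding root_comb_def by (rule Ymode_comb1_right) (simp_all add: finite_supp_ee finite_PhiE8)
  also have "\<dots> = (\<Sum>\<gamma>\<in>PhiE8. (if ip x \<gamma> = -1 then wt \<gamma> * ee (\<lambda>k. \<gamma> k + x k) b' else 0)
      + (if \<gamma> = neg x then wt \<gamma> * (hh x b' + dvec x b') else 0))"
  proof (rule sum.cong[OF refl])
    fix \<gamma> assume g: "\<gamma> \<in> PhiE8"
    note iff = root_ip_eq_neg2_iff[OF x g]
    show "wt \<gamma> * Ymode (ee x) 1 (bvec ({#}, \<gamma>)) b' = (if ip x \<gamma> = -1 then wt \<gamma> * ee (\<lambda>k. \<gamma> k + x k) b' else 0)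
      + (if \<gamma> = neg x then wt \<gamma> * (hh x b' + dvec x b') else 0)"
      unfolding ee_def Ymode_bvec_bvec Ybas_root_root[OF x g, unfolded ee_def] iff[symmetric] by auto
  qed
  also have "\<dots> = (\<Sum>\<gamma>\<in>PhiE8. if ip x \<gamma> = -1 then wt \<gamma> * ee (\<lambda>k. \<gamma> k + x k) b' else 0)
     + wt (neg x) * (hh x b' + dvec x b')"
    using PhiE8_neg[OF x] by (simp add: sum.distrib finite_PhiE8)
  finally show ?thesis .
qed

lemma sum_translate_level:
  assumes x: "x \<in> PhiE8"
    and inv: "\<And>\<gamma>. \<gamma> \<in> PhiE8 \<Longrightarrow> (\<lambda>k. \<gamma> k + x k) \<in> PhiE8 \<Longrightarrow> wt (\<lambda>k. \<gamma> k + x k) = wt \<gamma>"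
  shows "(\<Sum>\<gamma>\<in>PhiE8. if ip x \<gamma> = -1 then wt \<gamma> * ee (\<lambda>k. \<gamma> k + x k) b' else 0) = level_sum wt x 1 b'"
proof -
  let ?A = "{\<gamma> \<in> PhiE8. ip x \<gamma> = -1}"
  let ?B = "{\<delta> \<in> PhiE8. ip x \<delta> = 1}"
  let ?h = "\<lambda>\<gamma> k. \<gamma> k + x k"
  have bij: "bij_betw ?h ?A ?B" by (rule root_translation_bij[OF x])
  have "(\<Sum>\<gamma>\<in>PhiE8. if ip x \<gamma> = -1 then wt \<gamma> * ee (?h \<gamma>) b' else 0) = (\<Sum>\<gamma>\<in>?A. wt \<gamma> * ee (?h \<gamma>) b')"
    by (simp add: sum.inter_filter finite_PhiE8)
  also have "\<dots> = (\<Sum>\<gamma>\<in>?A. wt (?h \<gamma>) * ee (?h \<gamma>) b')"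
    using inv bij_betw_apply[OF bij] by (intro sum.cong) auto
  also have "\<dots> = (\<Sum>\<delta>\<in>?B. wt \<delta> * ee \<delta> b')"
    by (rule sum.reindex_bij_betw[OF bij])
  also have "\<dots> = level_sum wt x 1 b'"
    by (simp add: level_sum_def sum.inter_filter finite_PhiE8)
  finally show ?thesis .
qed

lemma level_sum_2: assumes x: "x \<in> PhiE8" shows "level_sum wt x 2 b' = wt x * ee x b'"
proof -
  have "level_sum wt x 2 b' = (\<Sum>\<gamma>\<in>PhiE8. if \<gamma> = x then wt \<gamma> * ee \<gamma> b' else 0)"
    unfolding level_sum_def using root_ip_eq_2_iff[OF x] by (intro sum.cong) auto
  then show ?thesis using x by (simp add: finite_PhiE8)
qed

lemma level_sum_neg2: assumes x: "x \<in> PhiE8" shows "level_sum wt x (-2) b' = wt (neg x) * ee (neg x) b'"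
proof -
  have "level_sum wt x (-2) b' = (\<Sum>\<gamma>\<in>PhiE8. if \<gamma> = neg x then wt \<gamma> * ee \<gamma> b' else 0)"
    unfolding level_sum_def using root_ip_eq_neg2_iff[OF x] by (intro sum.cong) auto
  then show ?thesis using PhiE8_neg[OF x] by (simp add: finite_PhiE8)
qed

lemma level_sum_neg: "level_sum wt (neg x) 1 b' = level_sum wt x (-1) b'"
  unfolding level_sum_def by (rule sum.cong[OF refl]) (auto simp: ip_neg_left)

lemma square_level_split: fixes k :: int assumes "-2 \<le> k" "k \<le> 2"
  shows "w * (2 * of_int (k^2) * e) = 2 * (if k = 1 then w * e else 0) + 2 * (if k = -1 then w * e else 0)
     + 8 * (if k = 2 then w * e else 0) + 8 * (if k = -2 then w * e else (0::complex))"
proof -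
  have "k = -2 \<or> k = -1 \<or> k = 0 \<or> k = 1 \<or> k = 2" using assms by auto
  then show ?thesis by (elim disjE) (simp_all add: algebra_simps)
qed

lemma Y1_hh_root_comb_levels: assumes x: "x \<in> PhiE8"
  shows "Ymode (hh x) 1 (root_comb wt) b' = 2 * level_sum wt x 1 b' + 2 * level_sum wt x (-1) b' + 8 * (wt x * ee x b') + 8 * (wt (neg x) * ee (neg x) b')"
proof -
  have "Ymode (hh x) 1 (root_comb wt) b' = (\<Sum>\<gamma>\<in>PhiE8. 2 * (if ip x \<gamma> = 1 then wt \<gamma> * ee \<gamma> b' else 0) + 2 * (if ip x \<gamma> = -1 then wt \<gamma> * ee \<gamma> b' else 0)
     + 8 * (if ip x \<gamma> = 2 then wt \<gamma> * ee \<gamma> b' else 0) + 8 * (if ip x \<gamma> = -2 then wt \<gamma> * ee \<gamma> b' else 0))"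
    unfolding Y1_hh_root_comb
  proof (rule sum.cong[OF refl])
    fix \<gamma> assume g: "\<gamma> \<in> PhiE8"
    show "wt \<gamma> * (2 * of_int ((ip x \<gamma>)^2) * ee \<gamma> b') = 2 * (if ip x \<gamma> = 1 then wt \<gamma> * ee \<gamma> b' else 0) + 2 * (if ip x \<gamma> = -1 then wt \<gamma> * ee \<gamma> b' else 0)
     + 8 * (if ip x \<gamma> = 2 then wt \<gamma> * ee \<gamma> b' else 0) + 8 * (if ip x \<gamma> = -2 then wt \<gamma> * ee \<gamma> b' else 0)"
      by (rule square_level_split) (use root_ip_bounds[OF x g] in auto)
  qed
  also have "\<dots> = 2 * level_sum wt x 1 b' + 2 * level_sum wt x (-1) b' + 8 * level_sum wt x 2 b' + 8 * level_sum wt x (-2) b'"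
    unfolding level_sum_def by (simp add: sum.distrib sum_distrib_left)
  finally show ?thesis unfolding level_sum_2[OF x] level_sum_neg2[OF x] .
qed

definition root_translation_invariant :: "(lat \<Rightarrow> complex) \<Rightarrow> lat \<Rightarrow> bool" where
  "root_translation_invariant wt x \<longleftrightarrow>
     (\<forall>\<gamma>\<in>PhiE8. \<forall>y\<in>{x, neg x}. (\<lambda>k. \<gamma> k + y k) \<in> PhiE8 \<longrightarrow> wt (\<lambda>k. \<gamma> k + y k) = wt \<gamma>)"

lemma Y1_tvec_root_comb:
  assumes x: "x \<in> PhiE8" and inv: "root_translation_invariant wt x"
  shows "Ymode (tvec x) 1 (root_comb wt) b' = 8 * wt x * ee x b' + 8 * wt (neg x) * ee (neg x) b'
    - 2 * (wt x + wt (neg x)) * hh x b' - 2 * (wt (neg x) - wt x) * dvec x b'"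
proof -
  have nx: "neg x \<in> PhiE8" by (rule PhiE8_neg[OF x])
  have R1: "(\<Sum>\<gamma>\<in>PhiE8. if ip x \<gamma> = -1 then wt \<gamma> * ee (\<lambda>k. \<gamma> k + x k) b' else 0) = level_sum wt x 1 b'"
    using inv by (intro sum_translate_level[OF x]) (auto simp: root_translation_invariant_def)
  have R2: "(\<Sum>\<gamma>\<in>PhiE8. if ip (neg x) \<gamma> = -1 then wt \<gamma> * ee (\<lambda>k. \<gamma> k + neg x k) b' else 0)
      = level_sum wt (neg x) 1 b'"
    using inv by (intro sum_translate_level[OF nx]) (auto simp: root_translation_invariant_def)
  show ?thesis
    unfolding Ymode_tvec_left[OF finite_supp_root_comb] Y1_hh_root_comb_levels[OF x]
      Y1_ee_root_comb[OF x] Y1_ee_root_comb[OF nx] R1 R2 level_sum_neg neg_neg hh_neg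
    by (simp add: dvec_neg algebra_simps)
qed

lemma Y1_tvec_root_comb_even:
  assumes x: "x \<in> PhiE8" and inv: "root_translation_invariant wt x" and even: "wt (neg x) = wt x"
  shows "Ymode (tvec x) 1 (root_comb wt) b = - 4 * wt x * tvec x b"
  unfolding Y1_tvec_root_comb[OF x inv] even by (simp add: tvec_def algebra_simps)

section \<open>The space \<open>U\<close>\<close>

lemma vac_E8: "vac_lat \<in> E8" by (simp add: E8_iff vac_lat_def)

lemma supp_root_comb: "supp (root_comb wt) \<subseteq> validbas"
proof
  fix bb assume "bb \<in> supp (root_comb wt)"
  then have "(\<Sum>\<gamma>\<in>PhiE8. wt \<gamma> * bvec ({#}, \<gamma>) bb) \<noteq> 0" by (simp add: supp_def root_comb_def)
  then obtain \<gamma> where g: "\<gamma> \<in> PhiE8" "wt \<gamma> * bvec ({#}, \<gamma>) bb \<noteq> 0" by (rule sum.not_neutral_contains_not_neutral)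
  then have "bb = ({#}, \<gamma>)" by (auto simp: bvec_def split: if_splits)
  then show "bb \<in> validbas" using g(1) by (simp add: validbas_def PhiE8_def)
qed

lemma root_comb_VE8: "root_comb wt \<in> VE8" using finite_supp_root_comb supp_root_comb by (simp add: VE8_def)

lemma omega_supp_vac: "omega bb \<noteq> 0 \<Longrightarrow> snd bb = vac_lat"
proof -
  assume nz: "omega bb \<noteq> 0"
  then have "(\<Sum>c\<in>{1..8}. \<Sum>d\<in>{1..8}. (cartan_inv c d / 2) * bvec ({#(c,1), (d,1)#}, vac_lat) bb) \<noteq> 0"
    by (simp add: omega_eq)
  then obtain c where "(\<Sum>d\<in>{1..8}. (cartan_inv c d / 2) * bvec ({#(c,1), (d,1)#}, vac_lat) bb) \<noteq> 0"
    by (rule sum.not_neutral_contains_not_neutral)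
  then obtain d where "(cartan_inv c d / 2) * bvec ({#(c,1), (d,1)#}, vac_lat) bb \<noteq> 0"
    by (rule sum.not_neutral_contains_not_neutral)
  then show ?thesis by (auto simp: bvec_def split: if_splits)
qed

lemma supp_omega: "supp omega \<subseteq> validbas"
proof
  fix bb assume "bb \<in> supp omega"
  then have "(\<Sum>c\<in>{1..8}. \<Sum>d\<in>{1..8}. (cartan_inv c d / 2) * bvec ({#(c,1), (d,1)#}, vac_lat) bb) \<noteq> 0"
    by (simp add: omega_eq supp_def)
  then obtain c where c: "c \<in> {1..8}" "(\<Sum>d\<in>{1..8}. (cartan_inv c d / 2) * bvec ({#(c,1), (d,1)#}, vac_lat) bb) \<noteq> 0"
    by (rule sum.not_neutral_contains_not_neutral)
  obtain d where d: "d \<in> {1..8}" "(cartan_inv c d / 2) * bvec ({#(c,1), (d,1)#}, vac_lat) bb \<noteq> 0"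
    using c(2) by (rule sum.not_neutral_contains_not_neutral)
  then have "bb = ({#(c,1), (d,1)#}, vac_lat)" by (auto simp: bvec_def split: if_splits)
  then show "bb \<in> validbas" using c(1) d(1) vac_E8 by (auto simp: validbas_def)
qed

lemma VE8_scale_add: assumes "finite (supp f)" "supp f \<subseteq> validbas" "finite (supp g)" "supp g \<subseteq> validbas"
  shows "(\<lambda>bb. c * f bb + g bb) \<in> VE8"
proof -
  have s: "supp (\<lambda>bb. c * f bb + g bb) \<subseteq> supp f \<union> supp g" by (auto simp: supp_def)
  show ?thesis unfolding VE8_def using s assms finite_subset[OF s] by auto
qed

lemma Y1_svec_eq_0:
  assumes "finite (supp w)" "\<forall>x\<in>PhiPos C. Ymode (tvec x) 1 w b = 0"
  shows "Ymode (svec C) 1 w b = 0"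
proof (cases "finite (PhiPos C)")
  case False
  then have "svec C = (\<lambda>_. 0)" by (simp add: svec_def)
  then show ?thesis by (simp add: Ymode_zero_left)
next
  case True
  have svec: "svec C = (\<lambda>bb. (1 / (2 * (of_nat (coxnum C) + 2))) * (\<Sum>x\<in>PhiPos C. tvec x bb))"
    by (simp add: svec_def tvec_def)
  have fs: "finite (supp (\<lambda>bb. \<Sum>x\<in>PhiPos C. tvec x bb))"
    by (rule finite_supp_sum[OF True]) (intro ballI finite_supp_tvec)
  have "Ymode (\<lambda>bb. \<Sum>x\<in>PhiPos C. tvec x bb) 1 w b = (\<Sum>x\<in>PhiPos C. Ymode (tvec x) 1 w b)"
    by (rule Ymode_sum_left[OF assms(1) True]) (intro ballI finite_supp_tvec)
  then show ?thesis
    unfolding svec Ymode_scale_left[OF assms(1) fs] using assms(2) by simp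
qed

lemma Uspace_intro:
  assumes "v \<in> VE8" and "\<And>C x b. C \<in> comps i \<Longrightarrow> x \<in> PhiPos C \<Longrightarrow> Ymode (tvec x) 1 v b = 0"
  shows "v \<in> Uspace i"
proof -
  have "finite (supp v)" using assms(1) by (simp add: VE8_def)
  then have "Ymode (svec C) 1 v = (\<lambda>_. 0)" if "C \<in> comps i" for C
    using Y1_svec_eq_0 assms(2) that by blast
  then show ?thesis using assms(1) by (simp add: Uspace_def)
qed

lemma Y1_tvec_omega_root_comb:
  assumes x: "x \<in> PhiE8" and inv: "root_translation_invariant wt x"
    and "wt x = 1/32" "wt (neg x) = 1/32"
  shows "Ymode (tvec x) 1 (\<lambda>bb. (1/16) * omega bb + root_comb wt bb) b = 0"
proof -
  have "Ymode (tvec x) 1 (\<lambda>bb. (1/16) * omega bb + root_comb wt bb) b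
      = (1/16) * Ymode (tvec x) 1 omega b + Ymode (tvec x) 1 (root_comb wt) b"
    unfolding Ymode_add_right[OF finite_supp_tvec finite_supp_scale[OF finite_supp_omega] finite_supp_root_comb]
      Ymode_scale_right[OF finite_supp_tvec finite_supp_omega] ..
  also have "\<dots> = (1/16) * (2 * tvec x b) - 4 * (1/32) * tvec x b"
    using Y1_tvec_omega[OF PhiE8_D(2)[OF x]] Y1_tvec_root_comb_even[OF x inv] assms(3,4) by simp
  finally show ?thesis by simp
qed

lemma Xvec_eq_root_comb: assumes i: "i \<le> 8" shows "Xvec i j = root_comb (\<lambda>\<gamma>. if \<gamma> \<in> Hset i j then 1 else 0)"
proof (rule ext)
  fix bb
  have "root_comb (\<lambda>\<gamma>. if \<gamma> \<in> Hset i j then 1 else 0) bb = (\<Sum>\<gamma>\<in>PhiE8. if \<gamma> \<in> Hset i j then ee \<gamma> bb else 0)"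
    unfolding root_comb_def ee_def by (rule sum.cong) auto
  also have "\<dots> = (\<Sum>\<gamma>\<in>{\<gamma> \<in> PhiE8. \<gamma> \<in> Hset i j}. ee \<gamma> bb)"
    by (simp add: sum.inter_filter finite_PhiE8)
  also have "{\<gamma> \<in> PhiE8. \<gamma> \<in> Hset i j} = Hset i j" using Hset_subset_PhiE8[OF i] by auto
  finally show "Xvec i j bb = root_comb (\<lambda>\<gamma>. if \<gamma> \<in> Hset i j then 1 else 0) bb" by (simp add: Xvec_def)
qed

lemma Xvec_in_Uspace:
  assumes i: "i \<le> 8" and j: "j \<in> {1..<nn i}"
  shows "Xvec i j \<in> Uspace i"
  unfolding Xvec_eq_root_comb[OF i]
proof (rule Uspace_intro[OF root_comb_VE8])
  fix C x b assume "C \<in> comps i" "x \<in> PhiPos C"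
  then have x: "x \<in> PhiE8" "x \<in> Lsub i" using PhiPos_comps_root[OF i] by auto
  have nx: "neg x \<in> Lsub i" by (rule Lsub_neg[OF i x(2)])
  let ?wt = "\<lambda>\<gamma>. if \<gamma> \<in> Hset i j then 1 else 0 :: complex"
  have "root_translation_invariant ?wt x"
    using Hset_add_Lsub_iff[OF i] x(2) nx by (auto simp: root_translation_invariant_def)
  moreover have "?wt x = 0" "?wt (neg x) = 0"
    using Lsub_disjoint_Hset[OF i j] x(2) nx by auto
  ultimately show "Ymode (tvec x) 1 (root_comb ?wt) b = 0"
    using Y1_tvec_root_comb_even[OF x(1)] by simp
qed

lemma ehat_eq: "ehat = (\<lambda>bb. (1/16) * omega bb + root_comb (\<lambda>_. 1/32) bb)"
  unfolding ehat_def root_comb_def ee_def by (rule ext) (simp add: sum_distrib_left sum_divide_distrib)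

lemma ehat_in_Uspace: "i \<le> 8 \<Longrightarrow> ehat \<in> Uspace i"
  unfolding ehat_eq
proof (rule Uspace_intro[OF VE8_scale_add[OF finite_supp_omega supp_omega finite_supp_root_comb supp_root_comb]])
  fix C x b assume "i \<le> 8" "C \<in> comps i" "x \<in> PhiPos C"
  then have "x \<in> PhiE8" using PhiPos_comps_root by blast
  then show "Ymode (tvec x) 1 (\<lambda>bb. 1/16 * omega bb + root_comb (\<lambda>_. 1/32) bb) b = 0"
    by (rule Y1_tvec_omega_root_comb) (simp_all add: root_translation_invariant_def)
qed

lemma coset_idx_vac: "i \<le> 8 \<Longrightarrow> coset_idx i vac_lat = 0"
  using coset_idx_eq[OF _ vac_E8] by (simp add: vac_lat_def)

lemma sigma_ehat_eq: assumes i: "i \<le> 8"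
  shows "sigma i ehat = (\<lambda>bb. (1/16) * omega bb + root_comb (\<lambda>\<gamma>. xi i ^ coset_idx i \<gamma> / 32) bb)"
proof (rule ext)
  fix bb
  have o: "xi i ^ coset_idx i (snd bb) * omega bb = omega bb"
  proof (cases "omega bb = 0")
    case False
    then have "snd bb = vac_lat" by (rule omega_supp_vac)
    then show ?thesis using coset_idx_vac[OF i] by simp
  qed simp
  have w: "xi i ^ coset_idx i (snd bb) * root_comb (\<lambda>_. 1/32) bb = root_comb (\<lambda>\<gamma>. xi i ^ coset_idx i \<gamma> / 32) bb"
    unfolding root_comb_def sum_distrib_left
  proof (rule sum.cong[OF refl])
    fix \<gamma>
    show "xi i ^ coset_idx i (snd bb) * (1 / 32 * bvec ({#}, \<gamma>) bb) = xi i ^ coset_idx i \<gamma> / 32 * bvec ({#}, \<gamma>) bb"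
      by (cases "bb = ({#}, \<gamma>)") (auto simp: bvec_def)
  qed
  show "sigma i ehat bb = (1/16) * omega bb + root_comb (\<lambda>\<gamma>. xi i ^ coset_idx i \<gamma> / 32) bb"
    unfolding sigma_def ehat_eq using o w by (simp add: algebra_simps)
qed

lemma sigma_ehat_in_Uspace:
  assumes i: "i \<le> 8"
  shows "sigma i ehat \<in> Uspace i"
  unfolding sigma_ehat_eq[OF i]
proof (rule Uspace_intro[OF VE8_scale_add[OF finite_supp_omega supp_omega finite_supp_root_comb supp_root_comb]])
  fix C x b assume "C \<in> comps i" "x \<in> PhiPos C"
  then have x: "x \<in> PhiE8" "x \<in> Lsub i" using PhiPos_comps_root[OF i] by auto
  have nx: "neg x \<in> Lsub i" by (rule Lsub_neg[OF i x(2)])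
  let ?wt = "\<lambda>\<gamma>. xi i ^ coset_idx i \<gamma> / 32"
  have "root_translation_invariant ?wt x"
    using coset_idx_add_Lsub[OF i PhiE8_D(1)] x(2) nx by (auto simp: root_translation_invariant_def)
  moreover have "?wt x = 1/32" "?wt (neg x) = 1/32"
    using coset_idx_Lsub[OF i] x(2) nx by auto
  ultimately show "Ymode (tvec x) 1 (\<lambda>bb. 1/16 * omega bb + root_comb ?wt bb) b = 0"
    by (rule Y1_tvec_omega_root_comb[OF x(1)])
qed

theorem mainTheorem5:
  fixes i :: nat
  assumes "i \<le> 8"
  shows "(\<forall>j\<in>{1..<nn i}. Xvec i j \<in> Uspace i) \<and> ehat \<in> Uspace i \<and> sigma i ehat \<in> Uspace i"
  using assms Xvec_in_Uspace ehat_in_Uspace sigma_ehat_in_Uspace by blast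

end
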